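(* Let $R(X)=\sum_{n=1}^{\infty}\frac{X^{n}}{n!}(e_{1}-g_{1})^{n-1}\in\mathfrak H[[X]]$. For any admissible index $\mathbf{k}$, \[ \frac{1}{1-R(X)g_{1}}\,\mathrm{sh}_{\hbar}\,g_{\mathbf{k}}\frac{1}{1-g_{1}X}\equiv\frac{1}{1-g_{1}X}\,\mathrm{sh}_{\hbar}\,E_{\mathbf{k}}\frac{1}{1-R(X)g_{1}} \] modulo the $\mathcal{C}$-submodule $\mathfrak{n}[[X]]$ of $\mathfrak{H}[[X]]$ (i.e. every coefficient of the difference lies in $\mathfrak n$).
   Context: Let $\mathcal{C}=\mathbb{Q}[\hbar]$ ($\hbar$ formal), $\mathfrak{H}=\mathcal{C}\langle a,b\rangle$ the non-commutative polynomial ring. For $k\ge1$, $g_k=ba^k$, $e_k=b(a+\hbar)a^{k-1}$ (so $e_1-g_1=\hbar b$). $A=\{\hbar b\}\cup\{ba^k\mid k\ge1\}$, $\mathcal{C}\langle A\rangle$ the $\mathcal{C}$-subalgebra generated by $1$ and $A$, $\widehat{\mathfrak H^0}=\mathcal C+\sum_{k\ge1}\mathcal C\langle A\rangle g_k$. Let $\mathfrak n_0$ be the $\mathcal C$-span of $(\hbar b)^{\alpha_1}g_{\beta_1+1}\cdots(\hbar b)^{\alpha_r}g_{\beta_r+1}$ with $r\ge1$, $\alpha_i,\beta_i\ge0$ and $\alpha_s\ge1,\beta_t\ge1$ for some $1\le s\le t\le r$; $\mathfrak n=\mathfrak n_0+\hbar\widehat{\mathfrak H^0}$. Shuffle product $\mathrm{sh}_\hbar$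 on $\mathfrak H$: $\mathcal C$-bilinear with $w\,\mathrm{sh}_\hbar\,1=1\,\mathrm{sh}_\hbar\,w=w$, $wa\,\mathrm{sh}_\hbar\,w'a=(wa\,\mathrm{sh}_\hbar\,w'+w\,\mathrm{sh}_\hbar\,w'a+\hbar(w\,\mathrm{sh}_\hbar\,w'))a$, $wb\,\mathrm{sh}_\hbar\,w'=w\,\mathrm{sh}_\hbar\,w'b=(w\,\mathrm{sh}_\hbar\,w')b$; extended to $\mathfrak H[[X]]$ coefficientwise. $\frac{1}{1-F}=\sum_{n\ge0}F^n$ for $F$ without constant term. Indices: finite tuples $\mathbf k=(k_1,\dots,k_r)$ of positive integers, admissible if empty or $k_r\ge2$; $g_{\mathbf k}=g_{k_1}\cdots g_{k_r}$, $g_\varnothing=1$. $E_{1^m}=\frac1{(m+1)!}\sum_{j=0}^m g_1^{\mathrm{sh}_\hbar j}\,\mathrm{sh}_\hbar\,e_1^{\mathrm{sh}_\hbar(m-j)}$ ($m\ge0$, $u^{\mathrm{sh}_\hbar0}=1$); for $\mathbf k=(1^{s_0},t_1+2,1^{s_1},\dots,t_r+2,1^{s_r})$ (unique form, $1^s$ = $s$ ones), $E_{\mathbf k}=E_{1^{s_0}}e_{t_1+2}E_{1^{s_1}}\cdots e_{t_r+2}E_{1^{s_r}}$, $E_\varnothing=1$. *)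

theory Defs
  imports "HOL-Library.Poly_Mapping" "HOL-Computational_Algebra.Polynomial"
begin

datatype letter = La | Lb

type_synonym coef = "rat poly"
type_synonym nc = "letter list \<Rightarrow>\<^sub>0 coef"   (* element of H: finitely supported word -> coefficient *)

definition hbar :: coef where "hbar = [:0, 1:]"

definition mono :: "letter list \<Rightarrow> nc" where "mono w = Poly_Mapping.single w 1"
definition cst :: "coef \<Rightarrow> nc" where "cst c = Poly_Mapping.single [] c"
definition ncone :: nc where "ncone = mono []"

definition ncmul :: "nc \<Rightarrow> nc \<Rightarrow> nc" (infixl "\<cdot>" 70) where
  "ncmul p q = (\<Sum>u\<in>Poly_Mapping.keys p. \<Sum>v\<in>Poly_Mapping.keys q. Poly_Mapping.single (u @ v) (Poly_Mapping.lookup p u * Poly_Mapping.lookup q v))"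

fun ncpow :: "nc \<Rightarrow> nat \<Rightarrow> nc" where
  "ncpow p 0 = ncone"
| "ncpow p (Suc n) = p \<cdot> ncpow p n"

definition prodl :: "nc list \<Rightarrow> nc" where "prodl xs = foldr ncmul xs ncone"

definition rmul :: "nc \<Rightarrow> letter \<Rightarrow> nc" where "rmul p l = p \<cdot> mono [l]"

(* shr works on reversed words: head of the list = last letter *)
function (sequential) shr :: "letter list \<Rightarrow> letter list \<Rightarrow> nc" where
  "shr [] ys = mono (rev ys)"
| "shr xs [] = mono (rev xs)"
| "shr (Lb # xs) ys = rmul (shr xs ys) Lb"
| "shr (La # xs) (Lb # ys) = rmul (shr (La # xs) ys) Lb"
| "shr (La # xs) (La # ys) =
     rmul (shr (La # xs) ys + shr xs (La # ys) + cst hbar \<cdot> shr xs ys) La"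
  by pat_completeness auto
termination by (relation "measure (\<lambda>(xs, ys). length xs + length ys)") auto

definition shw :: "letter list \<Rightarrow> letter list \<Rightarrow> nc" where
  "shw u v = shr (rev u) (rev v)"

definition sh :: "nc \<Rightarrow> nc \<Rightarrow> nc" where
  "sh p q = (\<Sum>u\<in>Poly_Mapping.keys p. \<Sum>v\<in>Poly_Mapping.keys q. cst (Poly_Mapping.lookup p u * Poly_Mapping.lookup q v) \<cdot> shw u v)"

fun shpow :: "nc \<Rightarrow> nat \<Rightarrow> nc" where
  "shpow p 0 = ncone"
| "shpow p (Suc n) = sh p (shpow p n)"

definition g :: "nat \<Rightarrow> nc" where "g k = mono (Lb # replicate k La)"
definition e :: "nat \<Rightarrow> nc" where
  "e k = mono [Lb] \<cdot> (mono [La] + cst hbar) \<cdot> mono (replicate (k - 1) La)"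

definition gidx :: "nat list \<Rightarrow> nc" where "gidx ks = prodl (map g ks)"

definition admissible :: "nat list \<Rightarrow> bool" where
  "admissible ks \<longleftrightarrow> (\<forall>k\<in>set ks. 1 \<le> k) \<and> (ks = [] \<or> 2 \<le> last ks)"

definition E1 :: "nat \<Rightarrow> nc" where
  "E1 m = cst [: inverse (fact (Suc m)) :] \<cdot>
          (\<Sum>j\<le>m. sh (shpow (g 1) j) (shpow (e 1) (m - j)))"

(* Eaux s ks: s = number of pending leading 1's; realises the unique decomposition
   k = (1^{s0}, t1+2, 1^{s1}, ..., tr+2, 1^{sr}) *)
fun Eaux :: "nat \<Rightarrow> nat list \<Rightarrow> nc" where
  "Eaux s [] = E1 s"
| "Eaux s (k # ks) = (if k = 1 then Eaux (Suc s) ks else E1 s \<cdot> e k \<cdot> Eaux 0 ks)"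

definition Eidx :: "nat list \<Rightarrow> nc" where "Eidx ks = Eaux 0 ks"

inductive_set cspan :: "nc set \<Rightarrow> nc set" for S where
  zero: "0 \<in> cspan S"
| gen: "x \<in> S \<Longrightarrow> cst c \<cdot> x \<in> cspan S"
| add: "x \<in> cspan S \<Longrightarrow> y \<in> cspan S \<Longrightarrow> x + y \<in> cspan S"

definition hb :: nc where "hb = cst hbar \<cdot> mono [Lb]"

definition Aset :: "nc set" where "Aset = {hb} \<union> {g k | k. 1 \<le> k}"

definition CA :: "nc set" where "CA = cspan {prodl xs | xs. set xs \<subseteq> Aset}"

definition H0hat :: "nc set" where
  "H0hat = cspan ({ncone} \<union> {x \<cdot> g k | x k. x \<in> CA \<and> 1 \<le> k})"

definition n0gen :: "nat list \<Rightarrow> nat list \<Rightarrow> nc" where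
  "n0gen al be = prodl (concat (map (\<lambda>i. [ncpow hb (al ! i), g (be ! i + 1)]) [0..<length al]))"

definition frak_n0 :: "nc set" where
  "frak_n0 = cspan {n0gen al be | al be. length al = length be \<and> 1 \<le> length al \<and>
      (\<exists>s t. s \<le> t \<and> t < length al \<and> 1 \<le> al ! s \<and> 1 \<le> be ! t)}"

definition frak_n :: "nc set" where
  "frak_n = {x + cst hbar \<cdot> y | x y. x \<in> frak_n0 \<and> y \<in> H0hat}"

section \<open>Formal power series in a central variable X: coefficient sequences\<close>

type_synonym ser = "nat \<Rightarrow> nc"

definition smul :: "ser \<Rightarrow> ser \<Rightarrow> ser" where
  "smul F G n = (\<Sum>i\<le>n. F i \<cdot> G (n - i))"

definition ssh :: "ser \<Rightarrow> ser \<Rightarrow> ser" where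
  "ssh F G n = (\<Sum>i\<le>n. sh (F i) (G (n - i)))"

definition sone :: ser where "sone n = (if n = 0 then ncone else 0)"

fun spow :: "ser \<Rightarrow> nat \<Rightarrow> ser" where
  "spow F 0 = sone"
| "spow F (Suc m) = smul F (spow F m)"

(* 1/(1-F) = sum_m F^m, for F without constant term: only m <= n contribute to X^n *)
definition geom :: "ser \<Rightarrow> ser" where
  "geom F n = (\<Sum>m\<le>n. spow F m n)"

definition Rser :: ser where
  "Rser n = (if n = 0 then 0 else cst [: inverse (fact n) :] \<cdot> ncpow (e 1 - g 1) (n - 1))"

definition RG :: ser where "RG n = Rser n \<cdot> g 1"

definition GX :: ser where "GX n = (if n = 1 then g 1 else 0)"

end

theory Submission
  imports Defs
begin

text \<open>Each coefficient of either side is a sum of shuffles of words ending in the letter a, so the rule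
  \<open>x a sh y a = (x a sh y + x sh y a + \<hbar> x sh y) a\<close> expresses the \<open>X\<^sup>n\<close>-coefficient of
  either side through the lower ones, multiplied by powers of b and followed by a. Both sides obey
  the same recursion up to error terms, because the differences \<open>e\<^sub>k - g\<^sub>k\<close>,
  \<open>E\<^sub>k - g\<^sub>k\<close> and \<open>R(X) g\<^sub>1 - g\<^sub>1 X\<close> only consist of terms \<open>\<hbar>\<^sup>j t\<close> in which
  \<open>\<hbar>\<^sup>j\<close> pays for every letter b of \<open>t\<close> not followed by a and has one degree to spare. Such
  weightings survive concatenation and shuffle, and a term with a spare degree followed by a lies
  in \<open>\<frak>n\<close>; so induction on \<open>n\<close> puts the difference of the coefficients into \<open>\<frak>n\<close>.\<close>

abbreviation lookup :: "nc \<Rightarrow> letter list \<Rightarrow> coef" where "lookup \<equiv> Poly_Mapping.lookup"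
abbreviation keys :: "nc \<Rightarrow> letter list set" where "keys \<equiv> Poly_Mapping.keys"
abbreviation single :: "letter list \<Rightarrow> coef \<Rightarrow> nc" where "single \<equiv> Poly_Mapping.single"

section \<open>The algebra H\<close>

lemma nc_eq_sum_single: "p = (\<Sum>u\<in>keys p. single u (lookup p u))"
  by (rule poly_mapping_eqI) (simp add: lookup_sum lookup_single when_def in_keys_iff)

lemma lookup_ncmul:
  "lookup (p \<cdot> q) t = (\<Sum>u\<in>keys p. \<Sum>v\<in>keys q. if u @ v = t then lookup p u * lookup q v else 0)"
  by (simp add: ncmul_def lookup_sum lookup_single when_def)

lemma ncmul_superset:
  assumes "finite S" "finite T" "keys p \<subseteq> S" "keys q \<subseteq> T"
  shows "p \<cdot> q = (\<Sum>u\<in>S. \<Sum>v\<in>T. single (u @ v) (lookup p u * lookup q v))"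
proof -
  have "(\<Sum>u\<in>S. \<Sum>v\<in>T. single (u @ v) (lookup p u * lookup q v))
      = (\<Sum>u\<in>keys p. \<Sum>v\<in>T. single (u @ v) (lookup p u * lookup q v))"
    by (rule sum.mono_neutral_right) (use assms in \<open>auto simp: in_keys_iff\<close>)
  also have "\<dots> = (\<Sum>u\<in>keys p. \<Sum>v\<in>keys q. single (u @ v) (lookup p u * lookup q v))"
    by (rule sum.cong[OF refl], rule sum.mono_neutral_right) (use assms in \<open>auto simp: in_keys_iff\<close>)
  finally show ?thesis by (simp add: ncmul_def)
qed

lemma ncmul_add_left: "(p + q) \<cdot> r = p \<cdot> r + q \<cdot> r"
  using keys_add[of p q]
  by (subst (1 2 3) ncmul_superset[where S="keys p \<union> keys q" and T="keys r"])
     (auto simp: lookup_add distrib_right single_add sum.distrib)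

lemma ncmul_add_right: "r \<cdot> (p + q) = r \<cdot> p + r \<cdot> q"
  using keys_add[of p q]
  by (subst (1 2 3) ncmul_superset[where T="keys p \<union> keys q" and S="keys r"])
     (auto simp: lookup_add distrib_left single_add sum.distrib)

lemma ncmul_zero_left [simp]: "0 \<cdot> p = 0"
  by (simp add: ncmul_def)

lemma ncmul_zero_right [simp]: "p \<cdot> 0 = 0"
  by (simp add: ncmul_def)

lemma ncmul_sum_left: "(\<Sum>i\<in>I. f i) \<cdot> q = (\<Sum>i\<in>I. f i \<cdot> q)"
  by (induction I rule: infinite_finite_induct) (auto simp: ncmul_add_left)

lemma ncmul_sum_right: "q \<cdot> (\<Sum>i\<in>I. f i) = (\<Sum>i\<in>I. q \<cdot> f i)"
  by (induction I rule: infinite_finite_induct) (auto simp: ncmul_add_right)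

lemma ncmul_diff_left: "(p - q) \<cdot> r = p \<cdot> r - q \<cdot> r"
  using ncmul_add_left[of "p - q" q r] by (simp add: eq_diff_eq)

lemma ncmul_diff_right: "r \<cdot> (p - q) = r \<cdot> p - r \<cdot> q"
  using ncmul_add_right[of r "p - q" q] by (simp add: eq_diff_eq)

lemma single_ncmul_single: "single u c \<cdot> single v d = single (u @ v) (c * d)"
  by (subst ncmul_superset[where S="{u}" and T="{v}"]) auto

lemma ncmul_assoc: "(p \<cdot> q) \<cdot> r = p \<cdot> (q \<cdot> r)"
proof -
  let ?e = "\<lambda>x. \<Sum>u\<in>keys x. single u (lookup x u)"
  have "(p \<cdot> q) \<cdot> r = (?e p \<cdot> ?e q) \<cdot> ?e r"
    by (simp only: nc_eq_sum_single[symmetric])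
  also have "\<dots> = (\<Sum>w\<in>keys r. \<Sum>v\<in>keys q. \<Sum>u\<in>keys p.
      single (u @ v @ w) (lookup p u * (lookup q v * lookup r w)))"
    by (simp add: ncmul_sum_left ncmul_sum_right single_ncmul_single mult.assoc)
  also have "\<dots> = ?e p \<cdot> (?e q \<cdot> ?e r)"
    by (simp add: ncmul_sum_left ncmul_sum_right single_ncmul_single mult.assoc)
  also have "\<dots> = p \<cdot> (q \<cdot> r)"
    by (simp only: nc_eq_sum_single[symmetric])
  finally show ?thesis .
qed

lemma mono_eq_single: "mono w = single w 1"
  by (simp add: mono_def)

lemma cst_eq_single: "cst c = single [] c"
  by (simp add: cst_def)

lemma ncone_eq_single: "ncone = single [] 1"
  by (simp add: ncone_def mono_def)

lemma lookup_cst_ncmul: "lookup (cst c \<cdot> x) t = c * lookup x t"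
  by (subst ncmul_superset[where S="{[]}" and T="keys x"])
     (auto simp: cst_def lookup_sum lookup_single when_def sum.delta' in_keys_iff)

lemma lookup_ncmul_cst: "lookup (x \<cdot> cst c) t = lookup x t * c"
  by (subst ncmul_superset[where T="{[]}" and S="keys x"])
     (auto simp: cst_def lookup_sum lookup_single when_def sum.delta' in_keys_iff)

lemma ncmul_cst_commute: "x \<cdot> cst c = cst c \<cdot> x"
  by (rule poly_mapping_eqI) (simp add: lookup_cst_ncmul lookup_ncmul_cst mult.commute)

lemma ncmul_cst_left_commute: "x \<cdot> (cst c \<cdot> y) = cst c \<cdot> (x \<cdot> y)"
  by (metis ncmul_cst_commute ncmul_assoc)

lemma cst_ncmul_cst: "cst c \<cdot> (cst d \<cdot> x) = cst (c * d) \<cdot> x"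
  by (rule poly_mapping_eqI) (simp add: lookup_cst_ncmul mult.assoc)

lemma cst_one [simp]: "cst 1 \<cdot> x = x"
  by (rule poly_mapping_eqI) (simp add: lookup_cst_ncmul)

lemma cst_zero [simp]: "cst 0 \<cdot> x = 0"
  by (rule poly_mapping_eqI) (simp add: lookup_cst_ncmul)

lemma cst_add: "cst (c + d) \<cdot> x = cst c \<cdot> x + cst d \<cdot> x"
  by (rule poly_mapping_eqI) (simp add: lookup_cst_ncmul lookup_add distrib_right)

lemma cst_sum: "cst (\<Sum>i\<in>I. f i) = (\<Sum>i\<in>I. cst (f i))"
  by (induction I rule: infinite_finite_induct) (auto simp: cst_def single_add)

lemma cst_one_eq_ncone: "cst 1 = ncone"
  by (simp add: cst_eq_single ncone_eq_single)

lemma ncone_left [simp]: "ncone \<cdot> x = x"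
  by (metis cst_one cst_one_eq_ncone)

lemma ncone_right [simp]: "x \<cdot> ncone = x"
  by (metis cst_one cst_one_eq_ncone ncmul_cst_commute)

lemma cst_ncmul_mono: "cst c \<cdot> mono w = single w c"
  by (rule poly_mapping_eqI) (simp add: lookup_cst_ncmul mono_def lookup_single when_def)

lemma mono_append: "mono (u @ v) = mono u \<cdot> mono v"
  by (simp add: mono_eq_single single_ncmul_single)

lemma ncmul_single: "x \<cdot> single w c = cst c \<cdot> (x \<cdot> mono w)"
  by (simp add: cst_ncmul_mono[symmetric] ncmul_cst_left_commute)

lemma ncpow_Suc_right: "ncpow p (Suc n) = ncpow p n \<cdot> p"
proof -
  have "ncpow p n \<cdot> p = p \<cdot> ncpow p n"
    by (induction n) (auto simp: ncmul_assoc)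
  then show ?thesis by simp
qed

lemma prodl_Nil: "prodl [] = ncone"
  by (simp add: prodl_def)

lemma prodl_Cons: "prodl (x # xs) = x \<cdot> prodl xs"
  by (simp add: prodl_def)

lemma prodl_append: "prodl (xs @ ys) = prodl xs \<cdot> prodl ys"
  by (induction xs) (auto simp: prodl_Nil prodl_Cons ncmul_assoc)

lemma prodl_replicate: "prodl (replicate n x) = ncpow x n"
  by (induction n) (auto simp: prodl_Nil prodl_Cons)

lemma rmul_mono: "rmul (mono u) l = mono (u @ [l])"
  by (simp add: rmul_def mono_append)

lemma rmul_eq_sum: "rmul p l = (\<Sum>u\<in>keys p. single (u @ [l]) (lookup p u))"
  by (simp add: rmul_def mono_eq_single, subst ncmul_superset[where S="keys p" and T="{[l]}"]) auto

lemma keys_rmul: "keys (rmul p l) \<subseteq> (\<lambda>u. u @ [l]) ` keys p"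
proof
  fix t assume "t \<in> keys (rmul p l)"
  then have "lookup (rmul p l) t \<noteq> 0" by (simp add: in_keys_iff)
  then obtain u where "u \<in> keys p" "u @ [l] = t"
    by (auto simp: rmul_eq_sum lookup_sum lookup_single when_def
        elim!: sum.not_neutral_contains_not_neutral split: if_splits)
  then show "t \<in> (\<lambda>u. u @ [l]) ` keys p" by auto
qed

lemma lookup_rmul: "lookup (rmul p l) (u @ [l]) = lookup p u"
  by (simp add: rmul_eq_sum lookup_sum lookup_single when_def in_keys_iff sum.delta' cong: if_cong)

lemma rmul_add: "rmul (p + q) l = rmul p l + rmul q l"
  by (simp add: rmul_def ncmul_add_left)

lemma rmul_diff: "rmul (p - q) l = rmul p l - rmul q l"
  by (simp add: rmul_def ncmul_diff_left)

lemma rmul_sum: "rmul (\<Sum>i\<in>I. f i) l = (\<Sum>i\<in>I. rmul (f i) l)"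
  by (simp add: rmul_def ncmul_sum_left)

lemma rmul_cst: "rmul (cst c \<cdot> p) l = cst c \<cdot> rmul p l"
  by (simp add: rmul_def ncmul_assoc)

lemma rmul_ncmul: "rmul (x \<cdot> y) l = x \<cdot> rmul y l"
  by (simp add: rmul_def ncmul_assoc)

section \<open>The shuffle product\<close>

lemma shr_Nil_right: "shr xs [] = mono (rev xs)"
  by (cases xs) auto

lemma shr_Lb_left: "shr (Lb # xs) ys = rmul (shr xs ys) Lb"
  by (cases ys) (auto simp: shr_Nil_right rmul_mono)

lemma shr_Lb_right: "shr xs (Lb # ys) = rmul (shr xs ys) Lb"
proof (induction xs)
  case Nil
  then show ?case by (simp add: rmul_mono)
next
  case (Cons x xs)
  then show ?case by (cases x) (auto simp: shr_Lb_left)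
qed

lemma shr_commute: "shr xs ys = shr ys xs"
  by (induction xs ys rule: shr.induct) (simp_all add: shr_Nil_right shr_Lb_left shr_Lb_right add_ac)

lemma shw_commute: "shw u v = shw v u"
  by (simp add: shw_def shr_commute)

lemma shw_snoc_Lb_left: "shw (u @ [Lb]) v = rmul (shw u v) Lb"
  by (simp add: shw_def shr_Lb_left)

lemma shw_snoc_Lb_right: "shw u (v @ [Lb]) = rmul (shw u v) Lb"
  by (simp add: shw_def shr_Lb_right)

lemma shw_snoc_La_La:
  "shw (u @ [La]) (v @ [La]) = rmul (shw (u @ [La]) v + shw u (v @ [La]) + cst hbar \<cdot> shw u v) La"
  by (simp add: shw_def)

lemma sh_superset:
  assumes "finite S" "finite T" "keys p \<subseteq> S" "keys q \<subseteq> T"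
  shows "sh p q = (\<Sum>u\<in>S. \<Sum>v\<in>T. cst (lookup p u * lookup q v) \<cdot> shw u v)"
proof -
  have "(\<Sum>u\<in>S. \<Sum>v\<in>T. cst (lookup p u * lookup q v) \<cdot> shw u v)
      = (\<Sum>u\<in>keys p. \<Sum>v\<in>T. cst (lookup p u * lookup q v) \<cdot> shw u v)"
    by (rule sum.mono_neutral_right) (use assms in \<open>auto simp: in_keys_iff\<close>)
  also have "\<dots> = (\<Sum>u\<in>keys p. \<Sum>v\<in>keys q. cst (lookup p u * lookup q v) \<cdot> shw u v)"
    by (rule sum.cong[OF refl], rule sum.mono_neutral_right) (use assms in \<open>auto simp: in_keys_iff\<close>)
  finally show ?thesis by (simp add: sh_def)
qed

lemma sh_add_left: "sh (p + q) r = sh p r + sh q r"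
  using keys_add[of p q]
  by (subst (1 2 3) sh_superset[where S="keys p \<union> keys q" and T="keys r"])
     (auto simp: lookup_add distrib_right cst_add sum.distrib)

lemma sh_add_right: "sh r (p + q) = sh r p + sh r q"
  using keys_add[of p q]
  by (subst (1 2 3) sh_superset[where T="keys p \<union> keys q" and S="keys r"])
     (auto simp: lookup_add distrib_left cst_add sum.distrib)

lemma sh_zero_left [simp]: "sh 0 p = 0"
  by (simp add: sh_def)

lemma sh_zero_right [simp]: "sh p 0 = 0"
  by (simp add: sh_def)

lemma sh_sum_left: "sh (\<Sum>i\<in>I. f i) q = (\<Sum>i\<in>I. sh (f i) q)"
  by (induction I rule: infinite_finite_induct) (auto simp: sh_add_left)

lemma sh_diff_left: "sh (p - q) r = sh p r - sh q r"
  using sh_add_left[of "p - q" q r] by (simp add: eq_diff_eq)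

lemma sh_diff_right: "sh r (p - q) = sh r p - sh r q"
  using sh_add_right[of r "p - q" q] by (simp add: eq_diff_eq)

lemma keys_cst_ncmul: "keys (cst c \<cdot> p) \<subseteq> keys p"
  by (auto simp: in_keys_iff lookup_cst_ncmul)

lemma sh_cst_left: "sh (cst c \<cdot> p) q = cst c \<cdot> sh p q"
  by (subst (1 2) sh_superset[where S="keys p" and T="keys q"])
     (auto simp: keys_cst_ncmul lookup_cst_ncmul ncmul_sum_right cst_ncmul_cst mult.assoc)

lemma sh_cst_right: "sh p (cst c \<cdot> q) = cst c \<cdot> sh p q"
  by (subst (1 2) sh_superset[where S="keys p" and T="keys q"])
     (auto simp: keys_cst_ncmul lookup_cst_ncmul ncmul_sum_right cst_ncmul_cst mult.assoc mult.left_commute)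

lemma shw_Nil_left [simp]: "shw [] v = mono v"
  by (simp add: shw_def)

lemma sh_commute: "sh p q = sh q p"
  unfolding sh_def by (subst sum.swap) (simp add: shw_commute mult.commute)

lemma sh_ncone_left [simp]: "sh ncone x = x"
proof -
  have "sh ncone x = (\<Sum>v\<in>keys x. cst (lookup x v) \<cdot> mono v)"
    by (subst sh_superset[where S="{[]}" and T="keys x"]) (auto simp: ncone_eq_single)
  also have "\<dots> = x"
    by (simp add: cst_ncmul_mono nc_eq_sum_single[symmetric])
  finally show ?thesis .
qed

lemma sh_rmul_left_eq_sum:
  "sh (rmul x l) y = (\<Sum>u\<in>keys x. \<Sum>v\<in>keys y. cst (lookup x u * lookup y v) \<cdot> shw (u @ [l]) v)"
proof -
  have "sh (rmul x l) y = (\<Sum>u\<in>(\<lambda>u. u @ [l]) ` keys x. \<Sum>v\<in>keys y.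
      cst (lookup (rmul x l) u * lookup y v) \<cdot> shw u v)"
    by (rule sh_superset) (auto simp: keys_rmul)
  then show ?thesis
    by (subst (asm) sum.reindex) (auto simp: inj_on_def lookup_rmul)
qed

lemma sh_rmul_right_eq_sum:
  "sh x (rmul y l) = (\<Sum>u\<in>keys x. \<Sum>v\<in>keys y. cst (lookup x u * lookup y v) \<cdot> shw u (v @ [l]))"
  using sh_rmul_left_eq_sum[of y l x]
  by (subst (asm) sum.swap) (simp add: sh_commute shw_commute mult.commute)

lemma sh_rmul_rmul_eq_sum:
  "sh (rmul x l) (rmul y l') =
     (\<Sum>u\<in>keys x. \<Sum>v\<in>keys y. cst (lookup x u * lookup y v) \<cdot> shw (u @ [l]) (v @ [l']))"
proof -
  have "sh (rmul x l) (rmul y l') = (\<Sum>u\<in>(\<lambda>u. u @ [l]) ` keys x. \<Sum>v\<in>(\<lambda>u. u @ [l']) ` keys y.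
      cst (lookup (rmul x l) u * lookup (rmul y l') v) \<cdot> shw u v)"
    by (rule sh_superset) (auto simp: keys_rmul)
  then show ?thesis
    by (subst (asm) sum.reindex, simp add: inj_on_def, subst (asm) sum.cong[OF refl], subst sum.reindex)
       (auto simp: inj_on_def lookup_rmul)
qed

lemma sh_rmul_Lb_left: "sh (rmul x Lb) y = rmul (sh x y) Lb"
  by (simp only: sh_rmul_left_eq_sum shw_snoc_Lb_left) (simp add: sh_def rmul_sum rmul_cst)

lemma sh_rmul_Lb_right: "sh x (rmul y Lb) = rmul (sh x y) Lb"
  by (simp only: sh_rmul_right_eq_sum shw_snoc_Lb_right) (simp add: sh_def rmul_sum rmul_cst)

lemma sh_rmul_La_La:
  "sh (rmul x La) (rmul y La) = rmul (sh (rmul x La) y + sh x (rmul y La) + cst hbar \<cdot> sh x y) La"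
  by (subst sh_rmul_rmul_eq_sum, simp only: shw_snoc_La_La, subst sh_rmul_left_eq_sum,
      subst sh_rmul_right_eq_sum)
     (simp only: rmul_add rmul_sum rmul_cst ncmul_add_right sum.distrib ncmul_sum_right sh_def
      cst_ncmul_cst mult.commute)

definition bpow :: "nat \<Rightarrow> nc" where "bpow l = mono (replicate l Lb)"

lemma bpow_0: "bpow 0 = ncone"
  by (simp add: bpow_def ncone_def)

lemma ncmul_bpow_Suc: "x \<cdot> bpow (Suc n) = rmul (x \<cdot> bpow n) Lb"
proof -
  have "replicate (Suc n) Lb = replicate n Lb @ [Lb]"
    by (simp add: replicate_append_same)
  then show ?thesis
    by (simp add: bpow_def rmul_def ncmul_assoc mono_append del: replicate_Suc)
qed

lemma bpow_add: "bpow a \<cdot> bpow b = bpow (a + b)"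
  by (simp add: bpow_def mono_append[symmetric] replicate_add)

lemma sh_ncmul_bpow_left: "sh (x \<cdot> bpow n) y = sh x y \<cdot> bpow n"
  by (induction n) (simp_all add: bpow_0 ncmul_bpow_Suc sh_rmul_Lb_left)

lemma sh_ncmul_bpow_right: "sh y (x \<cdot> bpow n) = sh y x \<cdot> bpow n"
  by (induction n) (simp_all add: bpow_0 ncmul_bpow_Suc sh_rmul_Lb_right)

definition all_terms :: "(nat \<Rightarrow> letter list \<Rightarrow> bool) \<Rightarrow> nc \<Rightarrow> bool" where
  "all_terms Q x \<longleftrightarrow> (\<forall>t j. coeff (lookup x t) j \<noteq> 0 \<longrightarrow> Q j t)"

lemma coeff_sum_nonzero: "coeff (\<Sum>i\<in>I. f i) n \<noteq> 0 \<Longrightarrow> \<exists>i\<in>I. coeff (f i) n \<noteq> 0"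
  by (metis (mono_tags, lifting) coeff_sum sum.neutral)

lemma coeff_mult_nonzero:
  assumes "coeff (p * q) n \<noteq> 0"
  obtains i k where "i + k = n" "coeff p i \<noteq> 0" "coeff q k \<noteq> 0"
proof -
  from assms have "(\<Sum>i\<le>n. coeff p i * coeff q (n - i)) \<noteq> 0"
    by (simp add: coeff_mult)
  then obtain i where "i \<le> n" "coeff p i * coeff q (n - i) \<noteq> 0"
    by (metis (no_types, lifting) sum.neutral atMost_iff)
  then show ?thesis by (intro that[of i "n - i"]) auto
qed

lemma all_terms_zero [simp]: "all_terms Q 0"
  by (simp add: all_terms_def)

lemma all_terms_add: "all_terms Q x \<Longrightarrow> all_terms Q y \<Longrightarrow> all_terms Q (x + y)"
  unfolding all_terms_def by (metis add.right_neutral coeff_add lookup_add)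

lemma all_terms_diff: "all_terms Q x \<Longrightarrow> all_terms Q y \<Longrightarrow> all_terms Q (x - y)"
  unfolding all_terms_def by (metis coeff_diff diff_self lookup_minus right_minus_eq)

lemma all_terms_sum: "(\<And>i. i \<in> I \<Longrightarrow> all_terms Q (f i)) \<Longrightarrow> all_terms Q (\<Sum>i\<in>I. f i)"
  unfolding all_terms_def by (auto simp: lookup_sum dest!: coeff_sum_nonzero)

lemma all_terms_weaken: "all_terms Q x \<Longrightarrow> (\<And>j t. Q j t \<Longrightarrow> Q' j t) \<Longrightarrow> all_terms Q' x"
  by (auto simp: all_terms_def)

lemma all_terms_cst:
  assumes "all_terms Q x" "\<And>i j t. coeff c i \<noteq> 0 \<Longrightarrow> Q j t \<Longrightarrow> Q' (i + j) t"
  shows "all_terms Q' (cst c \<cdot> x)"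
  using assms unfolding all_terms_def by (auto simp: lookup_cst_ncmul elim!: coeff_mult_nonzero)

lemma all_terms_cst_const: "all_terms Q x \<Longrightarrow> all_terms Q (cst [:r:] \<cdot> x)"
  by (erule all_terms_cst) (auto simp: coeff_pCons split: nat.splits)

lemma all_terms_ncmul:
  assumes "all_terms Q1 x" "all_terms Q2 y" "\<And>j1 u j2 v. Q1 j1 u \<Longrightarrow> Q2 j2 v \<Longrightarrow> Q3 (j1 + j2) (u @ v)"
  shows "all_terms Q3 (x \<cdot> y)"
  unfolding all_terms_def
proof (intro allI impI)
  fix t j assume "coeff (lookup (x \<cdot> y) t) j \<noteq> 0"
  then obtain u v where "u @ v = t" "coeff (lookup x u * lookup y v) j \<noteq> 0"
    by (auto simp: lookup_ncmul dest!: coeff_sum_nonzero split: if_splits)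
  then show "Q3 j t"
    using assms unfolding all_terms_def by (auto elim!: coeff_mult_nonzero)
qed

lemma all_terms_single: "(\<And>j. coeff c j \<noteq> 0 \<Longrightarrow> Q j w) \<Longrightarrow> all_terms Q (single w c)"
  by (auto simp: all_terms_def lookup_single when_def split: if_splits)

lemma all_terms_monoI: "Q 0 w \<Longrightarrow> all_terms Q (mono w)"
  by (auto simp: mono_eq_single coeff_1 intro!: all_terms_single split: if_splits)

lemma all_terms_ncmul_mono:
  assumes "all_terms Q x" "\<And>j t. Q j t \<Longrightarrow> Q' j (t @ w)"
  shows "all_terms Q' (x \<cdot> mono w)"
  by (rule all_terms_ncmul[OF assms(1) all_terms_monoI[of "\<lambda>j v. j = 0 \<and> v = w"]])
     (auto intro: assms(2))

lemma all_terms_rmul: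
  assumes "all_terms Q x" "\<And>j t. Q j t \<Longrightarrow> Q' j (t @ [l])"
  shows "all_terms Q' (rmul x l)"
  unfolding rmul_def by (rule all_terms_ncmul_mono[where Q=Q, OF assms(1)]) (rule assms(2))

lemma all_terms_sh:
  assumes "all_terms Q1 x" "all_terms Q2 y"
    "\<And>j1 u j2 v m t. Q1 j1 u \<Longrightarrow> Q2 j2 v \<Longrightarrow> coeff (lookup (shw u v) t) m \<noteq> 0 \<Longrightarrow> Q3 (j1 + j2 + m) t"
  shows "all_terms Q3 (sh x y)"
  unfolding all_terms_def
proof (intro allI impI)
  fix t j assume "coeff (lookup (sh x y) t) j \<noteq> 0"
  then obtain u v where "coeff ((lookup x u * lookup y v) * lookup (shw u v) t) j \<noteq> 0"
    by (auto simp: sh_def lookup_sum lookup_cst_ncmul dest!: coeff_sum_nonzero)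
  then obtain i m where im: "i + m = j" "coeff (lookup x u * lookup y v) i \<noteq> 0"
    "coeff (lookup (shw u v) t) m \<noteq> 0"
    by (rule coeff_mult_nonzero)
  from im(2) obtain j1 j2 where "j1 + j2 = i" "coeff (lookup x u) j1 \<noteq> 0" "coeff (lookup y v) j2 \<noteq> 0"
    by (rule coeff_mult_nonzero)
  then show "Q3 j t" using assms im unfolding all_terms_def by blast
qed

section \<open>Standalone letters b and the shuffle product\<close>

text \<open>The letters b not immediately followed by a. The word of
  \<open>b\<^sup>\<alpha>\<^sup>1 g\<^sub>\<beta>\<^sub>1\<^sub>+\<^sub>1 \<cdots> b\<^sup>\<alpha>\<^sup>r g\<^sub>\<beta>\<^sub>r\<^sub>+\<^sub>1\<close> has \<open>\<alpha>1 + \<cdots> + \<alpha>r\<close> of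
  them, one for each factor \<open>\<hbar>b\<close> of the corresponding generator of \<open>\<frak>n\<^sub>0\<close>.\<close>
fun hb_count :: "letter list \<Rightarrow> nat" where
  "hb_count [] = 0"
| "hb_count [Lb] = 1"
| "hb_count (Lb # Lb # w) = Suc (hb_count (Lb # w))"
| "hb_count (Lb # La # w) = hb_count (La # w)"
| "hb_count (La # w) = hb_count w"

definition ends_b :: "letter list \<Rightarrow> bool" where "ends_b w \<longleftrightarrow> w \<noteq> [] \<and> last w = Lb"

lemma hb_count_snoc_Lb: "hb_count (w @ [Lb]) = Suc (hb_count w)"
  by (induction w rule: hb_count.induct) auto

lemma hb_count_snoc_La: "hb_count (w @ [La]) = hb_count w - (if ends_b w then 1 else 0)"
proof -
  have "hb_count (w @ [La]) + (if ends_b w then 1 else 0) = hb_count w"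
    by (induction w rule: hb_count.induct) (auto simp: ends_b_def)
  then show ?thesis by linarith
qed

lemma hb_count_append: "v = [] \<or> hd v = Lb \<Longrightarrow> hb_count (u @ v) = hb_count u + hb_count v"
proof (induction u rule: hb_count.induct)
  case 2
  then show ?case by (cases v) auto
next
  case (5 w)
  then show ?case by (cases w) auto
qed auto

lemma hb_count_replicate_La: "hb_count (replicate k La @ w) = hb_count w"
  by (induction k) auto

lemma hb_count_replicate_Lb: "hb_count (replicate l Lb) = l"
  by (induction l) (simp, metis replicate_Suc replicate_append_same hb_count_snoc_Lb)

lemma hb_count_Lb_Cons: "w \<noteq> [] \<Longrightarrow> hd w = Lb \<Longrightarrow> hb_count (Lb # w) = Suc (hb_count w)"
  by (cases w) auto

lemma hb_count_g: "hb_count (Lb # replicate k La) = (if k = 0 then 1 else 0)"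
  by (cases k) (auto simp: hb_count_replicate_La[of _ "[]", simplified])

definition shuffle_inv :: "nat \<Rightarrow> letter list \<Rightarrow> letter list \<Rightarrow> letter list \<Rightarrow> bool" where
  "shuffle_inv m t u v \<longleftrightarrow> hb_count t \<le> hb_count u + hb_count v + m \<and>
     (ends_b t \<longleftrightarrow> ends_b u \<or> ends_b v) \<and> (t = [] \<longleftrightarrow> u = [] \<and> v = []) \<and>
     ((u = [] \<or> hd u = Lb) \<and> (v = [] \<or> hd v = Lb) \<longrightarrow> t = [] \<or> hd t = Lb)"

lemma hd_snoc: "hd (w @ [l]) = (if w = [] then l else hd w)"
  by (cases w) auto

lemma shuffle_inv_snoc_Lb_left: "shuffle_inv m t u v \<Longrightarrow> shuffle_inv m (t @ [Lb]) (u @ [Lb]) v"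
  by (auto simp: shuffle_inv_def ends_b_def hb_count_snoc_Lb hd_snoc)

lemma shuffle_inv_snoc_Lb_right: "shuffle_inv m t u v \<Longrightarrow> shuffle_inv m (t @ [Lb]) u (v @ [Lb])"
  by (auto simp: shuffle_inv_def ends_b_def hb_count_snoc_Lb hd_snoc)

lemma shuffle_inv_snoc_La_left:
  "shuffle_inv m t (u @ [La]) v \<Longrightarrow> shuffle_inv m (t @ [La]) (u @ [La]) (v @ [La])"
  by (auto simp: shuffle_inv_def ends_b_def hb_count_snoc_La hd_snoc split: if_splits)

lemma shuffle_inv_snoc_La_right:
  "shuffle_inv m t u (v @ [La]) \<Longrightarrow> shuffle_inv m (t @ [La]) (u @ [La]) (v @ [La])"
  by (auto simp: shuffle_inv_def ends_b_def hb_count_snoc_La hd_snoc split: if_splits)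

text \<open>Merging two letters a costs one factor \<open>\<hbar>\<close> and frees at most one letter b.\<close>
lemma shuffle_inv_snoc_La_merge:
  "shuffle_inv m t u v \<Longrightarrow> shuffle_inv (Suc m) (t @ [La]) (u @ [La]) (v @ [La])"
  by (auto simp: shuffle_inv_def ends_b_def hb_count_snoc_La hd_snoc split: if_splits)

lemma coeff_rmul_nonzero:
  assumes "coeff (lookup (rmul p l) t) m \<noteq> 0"
  obtains t' where "t = t' @ [l]" "coeff (lookup p t') m \<noteq> 0"
proof -
  have "t \<in> keys (rmul p l)" using assms by (auto simp: in_keys_iff)
  then obtain t' where "t = t' @ [l]" using keys_rmul by blast
  with assms that show ?thesis by (simp add: lookup_rmul)
qed

lemma coeff_mono_nonzero: "coeff (lookup (mono w) t) m \<noteq> 0 \<Longrightarrow> t = w \<and> m = 0"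
  by (auto simp: mono_def lookup_single when_def coeff_1 split: if_splits)

lemma coeff_hbar_mult_nonzero: "coeff (hbar * c) m \<noteq> 0 \<Longrightarrow> 1 \<le> m \<and> coeff c (m - 1) \<noteq> 0"
  by (cases m) (auto simp: hbar_def)

lemma shr_term_inv: "coeff (lookup (shr xs ys) t) m \<noteq> 0 \<Longrightarrow> shuffle_inv m t (rev xs) (rev ys)"
proof (induction xs ys arbitrary: t m rule: shr.induct)
  case (1 ys)
  then show ?case by (auto simp: shuffle_inv_def ends_b_def dest!: coeff_mono_nonzero)
next
  case (2 v va)
  then have "t = rev (v # va) \<and> m = 0" by (simp del: rev.simps add: coeff_mono_nonzero)
  then show ?case by (auto simp: shuffle_inv_def ends_b_def)
next
  case (3 xs v va)
  then show ?case by (auto elim!: coeff_rmul_nonzero intro: shuffle_inv_snoc_Lb_left)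
next
  case (4 xs ys)
  then show ?case by (auto elim!: coeff_rmul_nonzero intro: shuffle_inv_snoc_Lb_right)
next
  case (5 xs ys)
  from "5.prems" obtain t' where t: "t = t' @ [La]"
    and "coeff (lookup (shr (La # xs) ys + shr xs (La # ys) + cst hbar \<cdot> shr xs ys) t') m \<noteq> 0"
    by (auto elim: coeff_rmul_nonzero)
  then consider "coeff (lookup (shr (La # xs) ys) t') m \<noteq> 0"
    | "coeff (lookup (shr xs (La # ys)) t') m \<noteq> 0"
    | "coeff (hbar * lookup (shr xs ys) t') m \<noteq> 0"
    by (fastforce simp: lookup_add lookup_cst_ncmul)
  then show ?case
  proof cases
    case 1
    then show ?thesis using "5.IH"(1) t shuffle_inv_snoc_La_left by auto
  next
    case 2
    then show ?thesis using "5.IH"(2) t shuffle_inv_snoc_La_right by auto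
  next
    case 3
    then show ?thesis
      using "5.IH"(3) t shuffle_inv_snoc_La_merge[of "m - 1"] by (auto dest: coeff_hbar_mult_nonzero)
  qed
qed

lemma shw_term_inv: "coeff (lookup (shw u v) t) m \<noteq> 0 \<Longrightarrow> shuffle_inv m t u v"
  using shr_term_inv[of "rev u" "rev v" t m] by (simp add: shw_def)

section \<open>The submodule n\<close>

definition n0_word :: "nat list \<Rightarrow> nat list \<Rightarrow> letter list" where
  "n0_word al be =
     concat (map (\<lambda>i. replicate (al ! i) Lb @ Lb # replicate (Suc (be ! i)) La) [0..<length al])"

lemma n0_word_Cons:
  "n0_word (x # al) (y # be) = (replicate x Lb @ Lb # replicate (Suc y) La) @ n0_word al be"
  unfolding n0_word_def by (simp add: upt_conv_Cons map_Suc_upt[symmetric] o_def del: upt_Suc)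

lemma n0_word_snoc:
  "length al = length be \<Longrightarrow>
     n0_word (al @ [x]) (be @ [y]) = n0_word al be @ (replicate x Lb @ Lb # replicate (Suc y) La)"
  unfolding n0_word_def by (auto simp: nth_append intro!: arg_cong[where f=concat] map_cong)

lemma hbar_eq_monom: "hbar = monom 1 1"
  by (simp add: hbar_def monom_Suc monom_0)

lemma hb_eq_single: "hb = single [Lb] (monom 1 1)"
  by (simp add: hb_def cst_ncmul_mono hbar_eq_monom)

lemma ncpow_hb: "ncpow hb n = single (replicate n Lb) (monom 1 n)"
  by (induction n) (simp_all add: ncone_eq_single monom_0 one_pCons hb_eq_single single_ncmul_single mult_monom)

lemma g_eq_single: "g k = single (Lb # replicate k La) 1"
  by (simp add: g_def mono_eq_single)

lemma n0gen_eq_single: "n0gen al be = single (n0_word al be) (monom 1 (sum_list al))"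
proof -
  have "prodl (concat (map (\<lambda>i. [ncpow hb (al ! i), g (be ! i + 1)]) is)) =
     single (concat (map (\<lambda>i. replicate (al ! i) Lb @ Lb # replicate (Suc (be ! i)) La) is))
       (monom 1 (\<Sum>i\<leftarrow>is. al ! i))" for "is"
    by (induction "is") (auto simp: prodl_Nil prodl_Cons ncone_eq_single monom_0 one_pCons ncpow_hb
        g_eq_single single_ncmul_single mult_monom)
  moreover have "(\<Sum>i\<leftarrow>[0..<length al]. al ! i) = sum_list al"
    by (metis map_nth)
  ultimately show ?thesis
    by (simp add: n0gen_def n0_word_def)
qed

lemma prodl_in_CA: "set xs \<subseteq> Aset \<Longrightarrow> prodl xs \<in> CA"
  unfolding CA_def using cspan.gen[of "prodl xs" "{prodl xs | xs. set xs \<subseteq> Aset}" 1] by auto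

lemma n0gen_eq_CA_ncmul_g:
  assumes "length al = length be" "1 \<le> length al"
  obtains x k where "n0gen al be = x \<cdot> g k" "x \<in> CA" "1 \<le> k"
proof -
  define n where "n = length al - 1"
  have "length al = Suc n"
    using assms by (simp add: n_def)
  then have up: "[0..<length al] = [0..<n] @ [n]"
    by simp
  have flat: "prodl (concat (map (\<lambda>i. [ncpow hb (al ! i), g (Suc (be ! i))]) is)) =
     prodl (concat (map (\<lambda>i. replicate (al ! i) hb @ [g (Suc (be ! i))]) is))" for "is"
    by (induction "is") (auto simp: prodl_Cons prodl_append prodl_replicate ncmul_assoc)
  define L where "L = concat (map (\<lambda>i. replicate (al ! i) hb @ [g (Suc (be ! i))]) [0..<n])
      @ replicate (al ! n) hb"
  have "n0gen al be = prodl (concat (map (\<lambda>i. [ncpow hb (al ! i), g (Suc (be ! i))]) [0..<n]))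
      \<cdot> ncpow hb (al ! n) \<cdot> g (Suc (be ! n))"
    unfolding n0gen_def up by (simp add: prodl_append prodl_Cons prodl_Nil ncmul_assoc)
  also have "\<dots> = prodl (L @ [g (Suc (be ! n))])"
    unfolding L_def flat by (simp add: prodl_append prodl_Cons prodl_Nil prodl_replicate ncmul_assoc)
  also have "\<dots> = prodl L \<cdot> g (Suc (be ! n))"
    by (simp add: prodl_append prodl_Cons prodl_Nil)
  finally show ?thesis
    by (rule that) (auto intro!: prodl_in_CA simp: L_def Aset_def)
qed

text \<open>\<open>n_term j t\<close> says that \<open>\<hbar>\<^sup>j t \<in> \<frak>n\<close>, where \<open>t\<close> is either empty, or the word of a
  generator of \<open>\<frak>n\<^sub>0\<close>, or the word of such a generator without the side condition but with a
  spare factor \<open>\<hbar>\<close>, putting \<open>\<hbar>\<^sup>j t\<close> into \<open>\<hbar> H\<^sup>0\<close>.\<close>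
definition n_term :: "nat \<Rightarrow> letter list \<Rightarrow> bool" where
  "n_term j t \<longleftrightarrow> (t = [] \<and> 1 \<le> j) \<or>
     (\<exists>al be. length al = length be \<and> 1 \<le> length al \<and> t = n0_word al be \<and>
        (sum_list al < j \<or>
         (sum_list al \<le> j \<and> (\<exists>s r. s \<le> r \<and> r < length al \<and> 1 \<le> al ! s \<and> 1 \<le> be ! r))))"

lemma frak_nI: "x \<in> frak_n0 \<Longrightarrow> y \<in> H0hat \<Longrightarrow> z = x + cst hbar \<cdot> y \<Longrightarrow> z \<in> frak_n"
  unfolding frak_n_def by blast

lemma frak_n_zero: "0 \<in> frak_n"
  by (rule frak_nI[of 0 0]) (auto intro: cspan.zero simp: frak_n0_def H0hat_def)

lemma frak_n_add:
  assumes "x \<in> frak_n" "y \<in> frak_n"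
  shows "x + y \<in> frak_n"
proof -
  from assms obtain x1 y1 x2 y2 where "x = x1 + cst hbar \<cdot> y1" "y = x2 + cst hbar \<cdot> y2"
    "x1 \<in> frak_n0" "y1 \<in> H0hat" "x2 \<in> frak_n0" "y2 \<in> H0hat"
    unfolding frak_n_def by blast
  then show ?thesis
    unfolding frak_n_def frak_n0_def H0hat_def
    by (intro CollectI exI[of _ "x1 + x2"] exI[of _ "y1 + y2"]) (auto intro: cspan.add simp: ncmul_add_right)
qed

lemma frak_n_sum: "(\<And>i. i \<in> I \<Longrightarrow> f i \<in> frak_n) \<Longrightarrow> (\<Sum>i\<in>I. f i) \<in> frak_n"
  by (induction I rule: infinite_finite_induct) (auto intro: frak_n_zero frak_n_add)

lemma cst_monom_ncmul_mono_in_frak_n: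
  assumes "n_term j t"
  shows "cst (monom c j) \<cdot> mono t \<in> frak_n"
  using assms unfolding n_term_def
proof (elim disjE exE conjE)
  assume t: "t = []" and j: "1 \<le> j"
  have "monom 1 1 * monom c (j - 1) = monom c j"
    using j by (simp add: mult_monom)
  then have "cst (monom c j) \<cdot> mono t = 0 + cst hbar \<cdot> (cst (monom c (j - 1)) \<cdot> ncone)"
    using t by (simp add: cst_ncmul_cst hbar_eq_monom ncone_def)
  moreover have "cst (monom c (j - 1)) \<cdot> ncone \<in> H0hat"
    unfolding H0hat_def by (rule cspan.gen) simp
  ultimately show ?thesis
    by (intro frak_nI) (auto intro: cspan.zero simp: frak_n0_def)
next
  fix al be
  assume l: "length al = length be" "1 \<le> length al" and t: "t = n0_word al be" and lt: "sum_list al < j"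
  obtain x k where xk: "n0gen al be = x \<cdot> g k" "x \<in> CA" "1 \<le> k"
    using n0gen_eq_CA_ncmul_g[OF l] .
  define r where "r = j - 1 - sum_list al"
  have "monom 1 1 * (monom c r * monom 1 (sum_list al)) = monom c j"
    using lt by (simp add: mult_monom r_def)
  then have "cst (monom c j) \<cdot> mono t = 0 + cst hbar \<cdot> (cst (monom c r) \<cdot> (x \<cdot> g k))"
    by (simp add: xk(1)[symmetric] n0gen_eq_single t hbar_eq_monom mono_eq_single cst_eq_single
        single_ncmul_single mult.assoc)
  moreover have "cst (monom c r) \<cdot> (x \<cdot> g k) \<in> H0hat"
    unfolding H0hat_def by (rule cspan.gen) (use xk in blast)
  ultimately show ?thesis
    by (intro frak_nI) (auto intro: cspan.zero simp: frak_n0_def)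
next
  fix al be s r
  assume l: "length al = length be" "1 \<le> length al" and t: "t = n0_word al be"
    and le: "sum_list al \<le> j" and sr: "s \<le> r" "r < length al" "1 \<le> al ! s" "1 \<le> be ! r"
  have "monom c (j - sum_list al) * monom 1 (sum_list al) = monom c j"
    using le by (simp add: mult_monom)
  then have "cst (monom c j) \<cdot> mono t = cst (monom c (j - sum_list al)) \<cdot> n0gen al be + cst hbar \<cdot> 0"
    by (simp add: n0gen_eq_single t mono_eq_single cst_eq_single single_ncmul_single)
  moreover have "cst (monom c (j - sum_list al)) \<cdot> n0gen al be \<in> frak_n0"
    unfolding frak_n0_def by (rule cspan.gen) (use l sr in blast)
  ultimately show ?thesis
    by (intro frak_nI) (auto intro: cspan.zero simp: H0hat_def)
qed

lemma all_terms_n_term_in_frak_n: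
  assumes "all_terms n_term x"
  shows "x \<in> frak_n"
proof -
  have "x = (\<Sum>t\<in>keys x. cst (lookup x t) \<cdot> mono t)"
    by (simp add: cst_ncmul_mono nc_eq_sum_single[symmetric])
  also have "\<dots> = (\<Sum>t\<in>keys x. \<Sum>j\<le>degree (lookup x t). cst (monom (coeff (lookup x t) j) j) \<cdot> mono t)"
    by (subst (1) poly_as_sum_of_monoms[symmetric]) (simp add: cst_sum ncmul_sum_left)
  also have "\<dots> \<in> frak_n"
  proof (intro frak_n_sum)
    fix t j
    show "cst (monom (coeff (lookup x t) j) j) \<cdot> mono t \<in> frak_n"
    proof (cases "coeff (lookup x t) j = 0")
      case True
      then show ?thesis by (simp add: frak_n_zero)
    next
      case False
      with assms have "n_term j t" unfolding all_terms_def by blast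
      then show ?thesis by (rule cst_monom_ncmul_mono_in_frak_n)
    qed
  qed
  finally show ?thesis .
qed

definition ends_aa :: "letter list \<Rightarrow> bool" where "ends_aa w \<longleftrightarrow> (\<exists>u. w = u @ [La, La])"

lemma ends_aa_Cons: "2 \<le> length w \<Longrightarrow> ends_aa (x # w) \<longleftrightarrow> ends_aa w"
  unfolding ends_aa_def
proof
  assume "2 \<le> length w" "\<exists>u. x # w = u @ [La, La]"
  then obtain u where u: "x # w = u @ [La, La]"
    by blast
  with \<open>2 \<le> length w\<close> have "u \<noteq> []"
    by (cases u) auto
  with u show "\<exists>u. w = u @ [La, La]"
    by (cases u) auto
qed (metis append_Cons)

definition n0_decomposes :: "letter list \<Rightarrow> nat list \<Rightarrow> nat list \<Rightarrow> bool" where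
  "n0_decomposes w al be \<longleftrightarrow> length al = length be \<and> 1 \<le> length al \<and> w = n0_word al be \<and>
     hb_count w = sum_list al \<and> (ends_aa w \<longrightarrow> 1 \<le> last be)"

lemma n0_decomposes_length: "n0_decomposes w al be \<Longrightarrow> 2 \<le> length w"
  by (cases al; cases be) (auto simp: n0_decomposes_def n0_word_Cons)

lemma n0_decomposes_hd: "n0_decomposes w al be \<Longrightarrow> w \<noteq> [] \<and> hd w = Lb"
  by (cases al; cases be) (auto simp: n0_decomposes_def n0_word_Cons hd_append)

lemma n0_decomposes_g:
  assumes "1 \<le> k"
  shows "n0_decomposes (Lb # replicate k La) [0] [k - 1]"
proof -
  have "ends_aa (Lb # replicate k La) \<Longrightarrow> k \<noteq> 1"
    by (auto simp: ends_aa_def Cons_eq_append_conv)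
  then have "ends_aa (Lb # replicate k La) \<Longrightarrow> 2 \<le> k"
    using assms by linarith
  then show ?thesis
    using assms by (cases k) (auto simp: n0_decomposes_def n0_word_def hb_count_replicate_La[of _ "[]", simplified])
qed

lemma n0_decomposes_Lb_Cons:
  assumes "n0_decomposes w al be"
  shows "n0_decomposes (Lb # w) (Suc (hd al) # tl al) be"
proof -
  obtain a0 al' b0 be' where "al = a0 # al'" "be = b0 # be'"
    using assms by (cases al; cases be) (auto simp: n0_decomposes_def)
  then show ?thesis
    using assms n0_decomposes_hd[OF assms] ends_aa_Cons[OF n0_decomposes_length[OF assms]]
    by (auto simp: n0_decomposes_def n0_word_Cons hb_count_Lb_Cons)
qed

lemma n0_decomposes_g_append:
  assumes "1 \<le> k" "n0_decomposes w al be"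
  shows "n0_decomposes (Lb # replicate k La @ w) (0 # al) ((k - 1) # be)"
proof -
  have len: "2 \<le> length w"
    using n0_decomposes_length[OF assms(2)] .
  have "ends_aa (replicate i La @ w) \<longleftrightarrow> ends_aa w" for i
    by (induction i) (use len ends_aa_Cons in auto)
  then have "ends_aa (Lb # replicate k La @ w) \<longleftrightarrow> ends_aa w"
    using len ends_aa_Cons[of "replicate k La @ w"] by simp
  moreover obtain b0 be' where "be = b0 # be'"
    using assms by (cases be) (auto simp: n0_decomposes_def)
  ultimately show ?thesis
    using assms by (cases k) (auto simp: n0_decomposes_def n0_word_Cons hb_count_replicate_La)
qed

definition La_power_n0_word :: "letter list \<Rightarrow> bool" where
  "La_power_n0_word w \<longleftrightarrow> (\<exists>k. 1 \<le> k \<and> w = replicate k La) \<or>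
     (\<exists>k v al be. w = replicate k La @ v \<and> n0_decomposes v al be)"

lemma La_power_n0_word_La_Cons:
  assumes "La_power_n0_word w"
  shows "La_power_n0_word (La # w)"
  using assms[unfolded La_power_n0_word_def]
proof (elim disjE exE conjE)
  fix k assume "1 \<le> k" "w = replicate k La"
  then show ?thesis unfolding La_power_n0_word_def by (intro disjI1 exI[of _ "Suc k"]) simp
next
  fix k v al be assume "w = replicate k La @ v" "n0_decomposes v al be"
  then show ?thesis unfolding La_power_n0_word_def by (intro disjI2 exI[of _ "Suc k"]) auto
qed

lemma La_power_n0_word_Lb_Cons:
  assumes "La_power_n0_word w"
  shows "La_power_n0_word (Lb # w)"
  using assms[unfolded La_power_n0_word_def]
proof (elim disjE exE conjE)
  fix k assume "1 \<le> k" "w = replicate k La"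
  then show ?thesis
    using n0_decomposes_g[of k] unfolding La_power_n0_word_def by (intro disjI2 exI[of _ 0]) auto
next
  fix k v al be assume w: "w = replicate k La @ v" and v: "n0_decomposes v al be"
  show ?thesis
  proof (cases k)
    case 0
    then show ?thesis
      using w n0_decomposes_Lb_Cons[OF v] unfolding La_power_n0_word_def by (intro disjI2 exI[of _ 0]) auto
  next
    case (Suc k')
    then show ?thesis
      using w n0_decomposes_g_append[OF _ v, of k] unfolding La_power_n0_word_def by (intro disjI2 exI[of _ 0]) auto
  qed
qed

lemma La_power_n0_wordI: "w \<noteq> [] \<Longrightarrow> last w = La \<Longrightarrow> La_power_n0_word w"
proof (induction w)
  case (Cons x w)
  show ?case
  proof (cases "w = []")
    case True
    then show ?thesis
      using Cons.prems unfolding La_power_n0_word_def by (intro disjI1 exI[of _ 1]) auto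
  next
    case False
    then have "La_power_n0_word w"
      using Cons by simp
    then show ?thesis
      by (cases x) (simp_all add: La_power_n0_word_La_Cons La_power_n0_word_Lb_Cons)
  qed
qed simp

lemma n0_decomposition:
  assumes "w \<noteq> []" "hd w = Lb" "last w = La"
  obtains al be where "n0_decomposes w al be"
proof -
  consider k where "1 \<le> k" "w = replicate k La"
    | k v al be where "w = replicate k La @ v" "n0_decomposes v al be"
    using La_power_n0_wordI[OF assms(1,3)] unfolding La_power_n0_word_def by blast
  then show ?thesis
  proof cases
    case 1
    then show ?thesis using assms(2) by (cases k) auto
  next
    case (2 k v al be)
    then have "hd (replicate k La @ v) = Lb"
      using assms(2) by simp
    then have "k = 0"
      by (cases k) auto
    then show ?thesis using 2 that by simp
  qed
qed

lemma n_termI: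
  assumes "w \<noteq> []" "hd w = Lb" "last w = La"
    and "hb_count w < j \<or> (hb_count w \<le> j \<and> 1 \<le> hb_count w \<and> ends_aa w)"
  shows "n_term j w"
proof -
  obtain al be where h: "n0_decomposes w al be"
    using n0_decomposition[OF assms(1-3)] .
  from assms(4) show ?thesis
  proof
    assume "hb_count w < j"
    then show ?thesis using h unfolding n_term_def n0_decomposes_def by auto
  next
    assume a: "hb_count w \<le> j \<and> 1 \<le> hb_count w \<and> ends_aa w"
    moreover have "hb_count w = sum_list al"
      using h unfolding n0_decomposes_def by blast
    ultimately have "sum_list al \<noteq> 0"
      by linarith
    then obtain s where s: "s < length al" "al ! s \<noteq> 0"
      by (auto simp: sum_list_eq_0_iff in_set_conv_nth)
    have "be \<noteq> []" "length be = length al" "1 \<le> last be"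
      using h a by (auto simp: n0_decomposes_def)
    then have "1 \<le> be ! (length al - 1)"
      by (simp add: last_conv_nth)
    then have "\<exists>s r. s \<le> r \<and> r < length al \<and> 1 \<le> al ! s \<and> 1 \<le> be ! r"
      using s by (intro exI[of _ s] exI[of _ "length al - 1"]) auto
    then show ?thesis
      using h a unfolding n_term_def n0_decomposes_def by auto
  qed
qed

lemma n_term_mono: "n_term j t \<Longrightarrow> j \<le> j' \<Longrightarrow> n_term j' t"
  unfolding n_term_def by (elim disjE; fastforce)

lemma n_term_append_bpow_La:
  assumes "n_term j t" "1 \<le> l"
  shows "n_term (j + (l - 1)) (t @ replicate l Lb @ [La])"
proof -
  have r: "replicate l Lb @ [La] = replicate (l - 1) Lb @ Lb # replicate (Suc 0) La"
    using assms(2) by (cases l) (auto simp: replicate_append_same)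
  from assms(1)[unfolded n_term_def] show ?thesis
  proof (elim disjE exE conjE)
    assume "t = []" "1 \<le> j"
    then show ?thesis
      using r unfolding n_term_def by (intro disjI2 exI[of _ "[l - 1]"] exI[of _ "[0]"]) (auto simp: n0_word_def)
  next
    fix al be assume "length al = length be" "1 \<le> length al" "t = n0_word al be" "sum_list al < j"
    then show ?thesis
      using r unfolding n_term_def
      by (intro disjI2 exI[of _ "al @ [l - 1]"] exI[of _ "be @ [0]"]) (auto simp: n0_word_snoc)
  next
    fix al be s r'
    assume "length al = length be" "1 \<le> length al" "t = n0_word al be" "sum_list al \<le> j"
      "s \<le> r'" "r' < length al" "1 \<le> al ! s" "1 \<le> be ! r'"
    moreover have "\<exists>s r. s \<le> r \<and> r < length (al @ [l - 1]) \<and> 1 \<le> (al @ [l - 1]) ! s \<and> 1 \<le> (be @ [0]) ! r"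
      using calculation by (intro exI[of _ s] exI[of _ r']) (simp add: nth_append)
    ultimately show ?thesis
      using r unfolding n_term_def
      by (intro disjI2 exI[of _ "al @ [l - 1]"] exI[of _ "be @ [0]"]) (simp add: n0_word_snoc)
  qed
qed

lemma all_terms_n_term_rmul_bpow:
  assumes "all_terms n_term x" "1 \<le> l" "\<And>i. coeff c i \<noteq> 0 \<Longrightarrow> l - 1 \<le> i"
  shows "all_terms n_term (rmul (cst c \<cdot> (x \<cdot> bpow l)) La)"
proof -
  have "all_terms (\<lambda>j t. \<exists>t0. n_term j t0 \<and> t = t0 @ replicate l Lb) (x \<cdot> bpow l)"
    unfolding bpow_def by (rule all_terms_ncmul_mono[OF assms(1)]) blast
  then have "all_terms (\<lambda>j t. \<exists>j0 t0. n_term j0 t0 \<and> j0 + (l - 1) \<le> j \<and> t = t0 @ replicate l Lb)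
      (cst c \<cdot> (x \<cdot> bpow l))"
    by (rule all_terms_cst) (use assms(3) in fastforce)
  then show ?thesis
    by (rule all_terms_rmul) (use n_term_append_bpow_La[OF _ assms(2)] n_term_mono in fastforce)
qed

section \<open>Weighted elements\<close>

text \<open>In a weighted term \<open>\<hbar>\<^sup>j t\<close> the power of \<open>\<hbar>\<close> pays for every standalone letter b of \<open>t\<close>.
  Terms with a spare \<open>\<hbar>\<close>-degree fall into \<open>\<frak>n\<close> once a letter a is appended, and
  \<open>hb_cong\<close> below is the congruence modulo such elements.\<close>
definition weighted :: "nat \<Rightarrow> letter list \<Rightarrow> bool" where
  "weighted j t \<longleftrightarrow> t = [] \<or> (hd t = Lb \<and> hb_count t \<le> j)"

definition weighted_pos :: "nat \<Rightarrow> letter list \<Rightarrow> bool" where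
  "weighted_pos j t \<longleftrightarrow> t \<noteq> [] \<and> hd t = Lb \<and> hb_count t \<le> j \<and> 1 \<le> j"

lemma all_terms_weighted_posD: "all_terms weighted_pos x \<Longrightarrow> all_terms weighted x"
  by (erule all_terms_weaken) (simp add: weighted_pos_def weighted_def)

lemma weighted_pos_snoc_La:
  assumes t: "weighted_pos j t"
  shows "n_term j (t @ [La])"
proof (cases "ends_b t")
  case True
  then show ?thesis
    using t by (intro n_termI) (auto simp: weighted_pos_def hd_append hb_count_snoc_La)
next
  case False
  then have "t = butlast t @ [La]"
    using t append_butlast_last_id[of t]
    by (cases "last t") (auto simp: weighted_pos_def ends_b_def)
  then have "ends_aa (t @ [La])"
    unfolding ends_aa_def by (metis append.assoc append_Cons append_Nil)
  then show ?thesis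
    using t False by (intro n_termI) (auto simp: weighted_pos_def hd_append hb_count_snoc_La)
qed

lemma all_terms_weighted_pos_rmul_La: "all_terms weighted_pos x \<Longrightarrow> all_terms n_term (rmul x La)"
  by (rule all_terms_rmul[where Q=weighted_pos]) (auto intro: weighted_pos_snoc_La)

lemma weighted_sh:
  "all_terms weighted x \<Longrightarrow> all_terms weighted y \<Longrightarrow> all_terms weighted (sh x y)"
  by (erule all_terms_sh, assumption) (auto simp: weighted_def shuffle_inv_def dest!: shw_term_inv)

lemma weighted_pos_sh_left:
  "all_terms weighted_pos x \<Longrightarrow> all_terms weighted y \<Longrightarrow> all_terms weighted_pos (sh x y)"
  by (erule all_terms_sh, assumption)
     (auto simp: weighted_def weighted_pos_def shuffle_inv_def dest!: shw_term_inv)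

lemma weighted_pos_sh_right:
  "all_terms weighted x \<Longrightarrow> all_terms weighted_pos y \<Longrightarrow> all_terms weighted_pos (sh x y)"
  by (erule all_terms_sh, assumption)
     (auto simp: weighted_def weighted_pos_def shuffle_inv_def dest!: shw_term_inv)

lemma weighted_ncmul:
  "all_terms weighted x \<Longrightarrow> all_terms weighted y \<Longrightarrow> all_terms weighted (x \<cdot> y)"
  by (erule all_terms_ncmul, assumption) (auto simp: weighted_def hb_count_append hd_append)

lemma weighted_pos_ncmul_left:
  "all_terms weighted_pos x \<Longrightarrow> all_terms weighted y \<Longrightarrow> all_terms weighted_pos (x \<cdot> y)"
  by (erule all_terms_ncmul, assumption) (auto simp: weighted_def weighted_pos_def hb_count_append hd_append)

lemma weighted_pos_ncmul_right:
  "all_terms weighted x \<Longrightarrow> all_terms weighted_pos y \<Longrightarrow> all_terms weighted_pos (x \<cdot> y)"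
  by (erule all_terms_ncmul, assumption) (auto simp: weighted_def weighted_pos_def hb_count_append hd_append)

lemma all_terms_weighted_rmul_bpow:
  assumes "all_terms weighted x" "1 \<le> l" "\<And>i. coeff c i \<noteq> 0 \<Longrightarrow> l \<le> i"
  shows "all_terms n_term (rmul (cst c \<cdot> (x \<cdot> bpow l)) La)"
proof -
  have "all_terms (\<lambda>j t. \<exists>t0. weighted j t0 \<and> t = t0 @ replicate l Lb) (x \<cdot> bpow l)"
    unfolding bpow_def by (rule all_terms_ncmul_mono[OF assms(1)]) blast
  then have "all_terms weighted_pos (cst c \<cdot> (x \<cdot> bpow l))"
  proof (rule all_terms_cst)
    fix i j t assume "coeff c i \<noteq> 0" "\<exists>t0. weighted j t0 \<and> t = t0 @ replicate l Lb"
    then show "weighted_pos (i + j) t"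
      using assms(2) assms(3)[of i]
      by (auto simp: weighted_def weighted_pos_def hb_count_append hb_count_replicate_Lb hd_append)
  qed
  then show ?thesis
    by (rule all_terms_weighted_pos_rmul_La)
qed

lemma weighted_ncone: "all_terms weighted ncone"
  by (simp add: ncone_eq_single weighted_def all_terms_single)

lemma weighted_g: "1 \<le> k \<Longrightarrow> all_terms weighted (g k)"
  by (auto simp: g_eq_single weighted_def hb_count_g intro!: all_terms_single)

definition hb_cong :: "nc \<Rightarrow> nc \<Rightarrow> bool" where "hb_cong a b \<longleftrightarrow> all_terms weighted_pos (a - b)"

lemma hb_cong_refl: "hb_cong a a"
  by (simp add: hb_cong_def)

lemma hb_cong_sym: "hb_cong a b \<Longrightarrow> hb_cong b a"
  unfolding hb_cong_def by (metis all_terms_diff all_terms_zero minus_diff_eq diff_0)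

lemma hb_cong_trans [trans]: "hb_cong a b \<Longrightarrow> hb_cong b c \<Longrightarrow> hb_cong a c"
  unfolding hb_cong_def by (drule (1) all_terms_add) simp

lemma hb_cong_add: "hb_cong a b \<Longrightarrow> hb_cong c d \<Longrightarrow> hb_cong (a + c) (b + d)"
  unfolding hb_cong_def by (drule (1) all_terms_add) (simp add: algebra_simps)

lemma hb_cong_sum: "(\<And>i. i \<in> I \<Longrightarrow> hb_cong (f i) (h i)) \<Longrightarrow> hb_cong (\<Sum>i\<in>I. f i) (\<Sum>i\<in>I. h i)"
  unfolding hb_cong_def by (drule all_terms_sum) (simp add: sum_subtractf)

lemma hb_cong_cst: "hb_cong x y \<Longrightarrow> hb_cong (cst [:r:] \<cdot> x) (cst [:r:] \<cdot> y)"
  unfolding hb_cong_def by (drule all_terms_cst_const[of _ _ r]) (simp add: ncmul_diff_right)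

lemma hb_cong_sh_left: "hb_cong x x' \<Longrightarrow> all_terms weighted y \<Longrightarrow> hb_cong (sh x y) (sh x' y)"
  unfolding hb_cong_def by (simp add: sh_diff_left[symmetric] weighted_pos_sh_left)

lemma hb_cong_sh_right: "all_terms weighted x \<Longrightarrow> hb_cong y y' \<Longrightarrow> hb_cong (sh x y) (sh x y')"
  unfolding hb_cong_def by (simp add: sh_diff_right[symmetric] weighted_pos_sh_right)

lemma hb_cong_ncmul:
  assumes "hb_cong x x'" "hb_cong y y'" "all_terms weighted x'" "all_terms weighted y"
  shows "hb_cong (x \<cdot> y) (x' \<cdot> y')"
proof -
  have "x \<cdot> y - x' \<cdot> y' = (x - x') \<cdot> y + x' \<cdot> (y - y')"
    by (simp add: ncmul_diff_left ncmul_diff_right)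
  then show ?thesis
    using assms unfolding hb_cong_def
    by (simp add: all_terms_add weighted_pos_ncmul_left weighted_pos_ncmul_right)
qed

lemma hb_cong_weighted: "hb_cong a b \<Longrightarrow> all_terms weighted b \<Longrightarrow> all_terms weighted a"
  unfolding hb_cong_def by (metis all_terms_add all_terms_weighted_posD diff_add_cancel)

lemma e_eq_g_plus: "1 \<le> k \<Longrightarrow> e k = g k + cst hbar \<cdot> mono (Lb # replicate (k - 1) La)"
  by (cases k) (simp_all add: e_def g_def ncmul_add_left ncmul_add_right ncmul_assoc
      mono_append[symmetric] ncmul_cst_commute ncmul_cst_left_commute)

lemma e_hb_cong_g: "1 \<le> k \<Longrightarrow> hb_cong (e k) (g k)"
  unfolding hb_cong_def
  by (auto simp: e_eq_g_plus cst_ncmul_mono hbar_eq_monom weighted_pos_def hb_count_g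
      intro!: all_terms_single split: if_splits)

lemma weighted_e: "1 \<le> k \<Longrightarrow> all_terms weighted (e k)"
  using e_hb_cong_g weighted_g hb_cong_weighted by blast

section \<open>The power series\<close>

lemma sum_atMost_triangle:
  fixes f :: "nat \<Rightarrow> nat \<Rightarrow> nat \<Rightarrow> 'a::comm_monoid_add"
  shows "(\<Sum>i\<le>n. \<Sum>j\<le>i. f j (i - j) (n - i)) = (\<Sum>j\<le>n. \<Sum>k\<le>n - j. f j k (n - j - k))"
proof -
  have "(\<Sum>i\<le>n. \<Sum>j\<le>i. f j (i - j) (n - i)) = (\<Sum>(j, k)\<in>{(j, k). j + k \<le> n}. f j k (n - j - k))"
    by (subst sum.triangle_reindex_eq) (auto intro!: sum.cong simp: diff_diff_add)
  also have "\<dots> = (\<Sum>(j, k)\<in>(SIGMA j:{..n}. {..n - j}). f j k (n - j - k))"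
    by (rule sum.cong) auto
  also have "\<dots> = (\<Sum>j\<le>n. \<Sum>k\<le>n - j. f j k (n - j - k))"
    by (rule sum.Sigma[symmetric]) auto
  finally show ?thesis .
qed

lemma smul_assoc: "smul (smul F G) H n = smul F (smul G H) n"
proof -
  have "smul (smul F G) H n = (\<Sum>i\<le>n. \<Sum>j\<le>i. (F j \<cdot> G (i - j)) \<cdot> H (n - i))"
    by (simp add: smul_def ncmul_sum_left)
  also have "\<dots> = (\<Sum>j\<le>n. \<Sum>k\<le>n - j. (F j \<cdot> G k) \<cdot> H (n - j - k))"
    by (rule sum_atMost_triangle)
  also have "\<dots> = smul F (smul G H) n"
    by (simp add: smul_def ncmul_sum_right ncmul_assoc)
  finally show ?thesis .
qed

lemma smul_sone_left: "smul sone F n = F n"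
  by (simp add: smul_def sone_def atMost_atLeast0 sum.atLeast_Suc_atMost[of 0] if_distrib cong: if_cong)

lemma smul_sone_right: "smul F sone n = F n"
proof -
  have "smul F sone n = (\<Sum>i\<le>n. if i = n then F i else 0)"
    unfolding smul_def sone_def by (rule sum.cong) auto
  then show ?thesis by simp
qed

lemma spow_Suc_right: "spow F (Suc m) n = smul (spow F m) F n"
proof -
  have "smul (spow F m) F n = smul F (spow F m) n" for n
  proof (induction m arbitrary: n)
    case 0
    then show ?case by (simp add: smul_sone_left smul_sone_right)
  next
    case (Suc m)
    have "smul (spow F (Suc m)) F n = smul F (smul (spow F m) F) n"
      by (simp add: smul_assoc)
    also have "\<dots> = smul F (smul F (spow F m)) n"
      by (simp only: smul_def Suc.IH[unfolded smul_def])
    finally show ?case by simp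
  qed
  then show ?thesis by simp
qed

lemma spow_eq_0: "F 0 = 0 \<Longrightarrow> n < m \<Longrightarrow> spow F m n = 0"
proof (induction m arbitrary: n)
  case 0
  then show ?case by simp
next
  case (Suc m)
  have "F i \<cdot> spow F m (n - i) = 0" if "i \<le> n" for i
    using Suc that by (cases "i = 0") auto
  then show ?case by (simp add: smul_def)
qed

lemma geom_0: "geom F 0 = ncone"
  by (simp add: geom_def sone_def)

text \<open>The coefficientwise form of \<open>1/(1 - F) = 1 + (1/(1 - F)) F\<close>.\<close>
lemma geom_eq_sum:
  assumes F0: "F 0 = 0" and n: "1 \<le> n"
  shows "geom F n = (\<Sum>l\<in>{1..n}. geom F (n - l) \<cdot> F l)"
proof -
  have "geom F n = (\<Sum>m<n. spow F (Suc m) n)"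
    using n by (simp add: geom_def sum.atMost_shift sone_def)
  also have "\<dots> = (\<Sum>i\<le>n. (\<Sum>m<n. spow F m i) \<cdot> F (n - i))"
    by (simp add: spow_Suc_right smul_def ncmul_sum_left sum.swap[of _ "{..<n}"] del: spow.simps)
  also have "\<dots> = (\<Sum>i<n. geom F i \<cdot> F (n - i))"
  proof -
    have "(\<Sum>m<n. spow F m i) = geom F i" if "i < n" for i
      unfolding geom_def
      by (rule sum.mono_neutral_right) (use that spow_eq_0[where F=F, OF F0] in auto)
    then show ?thesis
      using F0 by (simp add: lessThan_Suc_atMost[symmetric])
  qed
  also have "\<dots> = (\<Sum>l\<in>{1..n}. geom F (n - l) \<cdot> F l)"
    by (rule sum.reindex_bij_witness[where i="\<lambda>l. n - l" and j="\<lambda>i. n - i"]) auto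
  finally show ?thesis .
qed

lemma geom_GX: "geom GX n = ncpow (g 1) n"
proof -
  have "spow GX m n = (if m = n then ncpow (g 1) m else 0)" for m
  proof (induction m arbitrary: n)
    case 0
    then show ?case by (simp add: sone_def)
  next
    case (Suc m)
    have "spow GX (Suc m) n = (\<Sum>i\<le>n. if i = 1 then g 1 \<cdot> spow GX m (n - 1) else 0)"
      unfolding spow.simps smul_def by (rule sum.cong) (auto simp: GX_def)
    then show ?case using Suc.IH by (cases n) (auto simp: sum.delta)
  qed
  then show ?thesis
    by (simp add: geom_def sum.delta)
qed

abbreviation gpow :: "nat \<Rightarrow> nc" where "gpow n \<equiv> ncpow (g 1) n"

lemma ncmul_g1: "x \<cdot> g 1 = rmul (x \<cdot> bpow 1) La"
  by (simp add: g_def bpow_def rmul_def mono_append[symmetric] ncmul_assoc)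

lemma gpow_Suc: "gpow (Suc n) = rmul (gpow n \<cdot> bpow 1) La"
  by (simp only: ncpow_Suc_right ncmul_g1)

text \<open>\<open>bconv p F\<close> is the product of the series \<open>F\<close> with \<open>\<Sum>\<^sub>l p\<^sub>l b\<^sup>l X\<^sup>l\<close>.\<close>
definition bconv :: "(nat \<Rightarrow> coef) \<Rightarrow> ser \<Rightarrow> ser" where
  "bconv p F n = (\<Sum>l\<in>{1..n}. cst (p l) \<cdot> (F (n - l) \<cdot> bpow l))"

lemma bconv_0 [simp]: "bconv p F 0 = 0"
  by (simp add: bconv_def)

lemma bconv_cong: "(\<And>m. m < n \<Longrightarrow> F m = G m) \<Longrightarrow> bconv p F n = bconv p G n"
  unfolding bconv_def by (rule sum.cong) auto

lemma bconv_add: "bconv p (\<lambda>m. F m + G m) n = bconv p F n + bconv p G n"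
  by (simp add: bconv_def sum.distrib ncmul_add_left ncmul_add_right)

lemma bconv_diff: "bconv p (\<lambda>m. F m - G m) n = bconv p F n - bconv p G n"
  by (simp add: bconv_def sum_subtractf[symmetric] ncmul_diff_left ncmul_diff_right)

lemma cst_ncmul_bconv: "cst c \<cdot> bconv p F n = bconv (\<lambda>l. c * p l) F n"
  by (simp add: bconv_def ncmul_sum_right cst_ncmul_cst)

lemma rmul_bconv: "rmul (bconv p F n) l = (\<Sum>l'\<in>{1..n}. rmul (cst (p l') \<cdot> (F (n - l') \<cdot> bpow l')) l)"
  by (simp add: bconv_def rmul_sum)

definition RG_coeff :: "nat \<Rightarrow> coef" where "RG_coeff l = monom (inverse (fact l)) (l - 1)"
definition GX_coeff :: "nat \<Rightarrow> coef" where "GX_coeff l = (if l = 1 then 1 else 0)"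

lemma e1_minus_g1: "e 1 - g 1 = hb"
proof -
  have "e 1 = mono [Lb] \<cdot> mono [La] + mono [Lb] \<cdot> cst hbar"
    by (simp add: e_def ncmul_add_right ncone_def[symmetric])
  then show ?thesis
    by (simp add: g_def mono_append[symmetric] hb_def ncmul_cst_commute)
qed

lemma RG_eq_single: "1 \<le> l \<Longrightarrow> RG l = single (replicate l Lb @ [La]) (RG_coeff l)"
proof -
  assume "1 \<le> l"
  then obtain k where k: "l = Suc k" by (cases l) auto
  have r: "replicate k Lb @ [Lb, La] = Lb # replicate k Lb @ [La]"
    by (induction k) auto
  have "RG l = cst [:inverse (fact l):] \<cdot> single (replicate k Lb) (monom 1 k) \<cdot> single [Lb, La] 1"
    using k e1_minus_g1 by (simp add: RG_def Rser_def ncpow_hb) (simp add: g_eq_single)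
  also have "\<dots> = single (replicate l Lb @ [La]) (RG_coeff l)"
    by (simp add: cst_eq_single single_ncmul_single RG_coeff_def smult_monom k r)
  finally show ?thesis .
qed

lemma RG_0: "RG 0 = 0"
  by (simp add: RG_def Rser_def)

lemma RG_1: "RG 1 = g 1"
  by (simp add: RG_eq_single RG_coeff_def g_eq_single monom_0 one_pCons)

lemma geom_RG_rec: "1 \<le> i \<Longrightarrow> geom RG i = rmul (bconv RG_coeff (geom RG) i) La"
  by (simp add: bconv_def geom_eq_sum[where F=RG, OF RG_0] RG_eq_single ncmul_single bpow_def rmul_def
      mono_append ncmul_assoc ncmul_sum_left ncmul_cst_left_commute)

lemma sum_GX_coeff: "1 \<le> i \<Longrightarrow> (\<Sum>l\<in>{1..i}. cst (GX_coeff l) \<cdot> f l) = f 1"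
proof -
  have "(\<Sum>l\<in>{1..i}. cst (GX_coeff l) \<cdot> f l) = (\<Sum>l\<in>{1..i}. if l = 1 then f 1 else 0)"
    by (rule sum.cong) (auto simp: GX_coeff_def)
  then show "1 \<le> i \<Longrightarrow> ?thesis"
    by (simp add: sum.delta)
qed

lemma bconv_GX_coeff: "bconv GX_coeff F n = (if n = 0 then 0 else F (n - 1) \<cdot> bpow 1)"
  using sum_GX_coeff[of n "\<lambda>l. F (n - l) \<cdot> bpow l"] by (simp add: bconv_def)

lemma geom_GX_rec: "1 \<le> i \<Longrightarrow> geom GX i = rmul (bconv GX_coeff (geom GX) i) La"
proof -
  assume i: "1 \<le> i"
  then obtain k where k: "i = Suc k" by (cases i) auto
  then show ?thesis
    by (simp add: bconv_GX_coeff geom_GX k ncpow_Suc_right[of _ k] ncmul_g1[simplified] del: ncpow.simps)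
qed

lemma ncmul_geom_GX_rec: "1 \<le> j \<Longrightarrow> x \<cdot> geom GX j = rmul (bconv GX_coeff (\<lambda>m. x \<cdot> geom GX m) j) La"
  by (simp add: geom_GX_rec bconv_def rmul_ncmul[symmetric] ncmul_sum_right ncmul_cst_left_commute ncmul_assoc)

lemma ncmul_geom_RG_rec: "1 \<le> j \<Longrightarrow> x \<cdot> geom RG j = rmul (bconv RG_coeff (\<lambda>m. x \<cdot> geom RG m) j) La"
  by (simp add: geom_RG_rec bconv_def rmul_ncmul[symmetric] ncmul_sum_right ncmul_cst_left_commute ncmul_assoc)

lemma weighted_RG: "all_terms weighted (RG l)"
proof (cases "l = 0")
  case True
  then show ?thesis by (simp add: RG_0)
next
  case False
  have "hb_count (replicate l Lb @ [La]) = l - 1"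
    using False by (simp add: hb_count_snoc_La hb_count_replicate_Lb ends_b_def)
  moreover have "hd (replicate l Lb @ [La]) = Lb"
    using False by (cases l) auto
  ultimately show ?thesis
    using False by (auto simp: RG_eq_single RG_coeff_def weighted_def intro!: all_terms_single split: if_splits)
qed

lemma weighted_pos_RG: "2 \<le> l \<Longrightarrow> all_terms weighted_pos (RG l)"
  using weighted_RG[of l] unfolding all_terms_def
  by (auto simp: RG_eq_single RG_coeff_def weighted_def weighted_pos_def lookup_single when_def split: if_splits)

lemma weighted_geom_RG: "all_terms weighted (geom RG n)"
proof (induction n rule: less_induct)
  case (less n)
  show ?case
  proof (cases "n = 0")
    case True
    then show ?thesis by (simp add: geom_0 weighted_ncone)
  next
    case False
    then show ?thesis
      using less by (auto simp: geom_eq_sum[where F=RG, OF RG_0] intro!: all_terms_sum weighted_ncmul weighted_RG)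
  qed
qed

lemma weighted_gpow: "all_terms weighted (gpow n)"
  by (induction n) (auto simp: ncone_def[symmetric] weighted_ncone intro!: weighted_ncmul weighted_g)

text \<open>Only the term \<open>l = 1\<close> of \<open>R(X) g\<^sub>1\<close> lacks a spare degree, and it equals \<open>g\<^sub>1 X\<close>.\<close>
lemma geom_RG_hb_cong_geom_GX: "hb_cong (geom RG n) (geom GX n)"
proof (induction n rule: less_induct)
  case (less n)
  show ?case
  proof (cases n)
    case 0
    then show ?thesis by (simp add: hb_cong_refl geom_0)
  next
    case (Suc k)
    have "{1..n} = insert 1 {2..n}" using Suc by auto
    then have "geom RG n - geom GX n
        = (geom RG k - geom GX k) \<cdot> RG 1 + (\<Sum>l\<in>{2..n}. geom RG (n - l) \<cdot> RG l)"
      using Suc by (simp add: geom_eq_sum[where F=RG, OF RG_0] geom_GX ncpow_Suc_right RG_1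
          ncmul_diff_left RG_1[simplified] del: ncpow.simps)
    moreover have "all_terms weighted_pos ((geom RG k - geom GX k) \<cdot> RG 1)"
      using less Suc by (auto simp: hb_cong_def intro: weighted_pos_ncmul_left weighted_RG)
    moreover have "all_terms weighted_pos (\<Sum>l\<in>{2..n}. geom RG (n - l) \<cdot> RG l)"
      by (auto intro!: all_terms_sum weighted_pos_ncmul_right weighted_geom_RG weighted_pos_RG)
    ultimately show ?thesis
      by (simp add: hb_cong_def all_terms_add)
  qed
qed

lemma weighted_pos_rmul_bpow1: "all_terms weighted_pos x \<Longrightarrow> all_terms weighted_pos (rmul (x \<cdot> bpow 1) La)"
proof -
  have "hb_count (t @ [Lb, La]) = hb_count t" for t
    using hb_count_snoc_La[of "t @ [Lb]"] hb_count_snoc_Lb[of t] by (simp add: ends_b_def)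
  moreover assume "all_terms weighted_pos x"
  then have "all_terms (\<lambda>j t. \<exists>t0. weighted_pos j t0 \<and> t = t0 @ [Lb]) (x \<cdot> bpow 1)"
    unfolding bpow_def by (rule all_terms_ncmul_mono) auto
  ultimately show ?thesis
    by (elim all_terms_rmul) (auto simp: weighted_pos_def hd_append)
qed

lemma weighted_pos_rmul_hbar_bpow2:
  "all_terms weighted x \<Longrightarrow> all_terms weighted_pos (rmul (cst hbar \<cdot> ((x \<cdot> bpow 1) \<cdot> bpow 1)) La)"
proof -
  have "hb_count (t @ [Lb, Lb, La]) = Suc (hb_count t)" for t
    using hb_count_snoc_La[of "t @ [Lb, Lb]"] hb_count_snoc_Lb[of t] hb_count_snoc_Lb[of "t @ [Lb]"]
    by (simp add: ends_b_def)
  moreover assume "all_terms weighted x"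
  then have "all_terms (\<lambda>j t. \<exists>t0. weighted j t0 \<and> t = t0 @ [Lb, Lb]) ((x \<cdot> bpow 1) \<cdot> bpow 1)"
    unfolding bpow_def by (rule all_terms_ncmul_mono[OF all_terms_ncmul_mono]) auto
  then have "all_terms (\<lambda>j t. \<exists>t0. weighted (j - 1) t0 \<and> 1 \<le> j \<and> t = t0 @ [Lb, Lb])
      (cst hbar \<cdot> ((x \<cdot> bpow 1) \<cdot> bpow 1))"
    by (rule all_terms_cst) (auto simp: hbar_eq_monom split: if_splits)
  ultimately show ?thesis
    by (elim all_terms_rmul) (auto simp: weighted_def weighted_pos_def hd_append split: if_splits)
qed

lemma sh_gpow_Suc_Suc:
  "sh (gpow (Suc i)) (gpow (Suc j)) = rmul (sh (gpow (Suc i)) (gpow j) \<cdot> bpow 1) La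
     + rmul (sh (gpow i) (gpow (Suc j)) \<cdot> bpow 1) La + rmul (cst hbar \<cdot> ((sh (gpow i) (gpow j) \<cdot> bpow 1) \<cdot> bpow 1)) La"
proof -
  have "sh (gpow (Suc i)) (gpow (Suc j)) = sh (rmul (gpow i \<cdot> bpow 1) La) (rmul (gpow j \<cdot> bpow 1) La)"
    by (simp only: gpow_Suc)
  also have "\<dots> = rmul (sh (gpow (Suc i)) (gpow j \<cdot> bpow 1) + sh (gpow i \<cdot> bpow 1) (gpow (Suc j))
      + cst hbar \<cdot> sh (gpow i \<cdot> bpow 1) (gpow j \<cdot> bpow 1)) La"
    by (simp only: sh_rmul_La_La gpow_Suc)
  finally show ?thesis
    by (simp add: sh_ncmul_bpow_left sh_ncmul_bpow_right rmul_add del: ncpow.simps)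
qed

lemma sh_gpow_gpow: "hb_cong (sh (gpow i) (gpow j)) (cst [:of_nat ((i + j) choose i):] \<cdot> gpow (i + j))"
proof (induction "i + j" arbitrary: i j rule: less_induct)
  case less
  show ?case
  proof (cases "i = 0 \<or> j = 0")
    case True
    then show ?thesis by (auto simp: hb_cong_refl one_pCons[symmetric] sh_commute)
  next
    case False
    then obtain i' j' where ij: "i = Suc i'" "j = Suc j'" by (cases i; cases j) auto
    let ?c1 = "[:of_nat ((i' + j) choose i):] :: coef" and ?c2 = "[:of_nat ((i' + j) choose i'):] :: coef"
    have cong_step: "hb_cong (rmul (x \<cdot> bpow 1) La) (rmul (y \<cdot> bpow 1) La)" if "hb_cong x y" for x y
      using that unfolding hb_cong_def
      by (simp add: rmul_diff[symmetric] ncmul_diff_left[symmetric] weighted_pos_rmul_bpow1[simplified])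
    have eq: "sh (gpow i) (gpow j) = rmul (sh (gpow i) (gpow j') \<cdot> bpow 1) La
        + rmul (sh (gpow i') (gpow j) \<cdot> bpow 1) La
        + rmul (cst hbar \<cdot> ((sh (gpow i') (gpow j') \<cdot> bpow 1) \<cdot> bpow 1)) La"
      unfolding ij by (rule sh_gpow_Suc_Suc)
    have "hb_cong (rmul (cst hbar \<cdot> ((sh (gpow i') (gpow j') \<cdot> bpow 1) \<cdot> bpow 1)) La) 0"
      unfolding hb_cong_def
      using weighted_pos_rmul_hbar_bpow2[OF weighted_sh[OF weighted_gpow weighted_gpow]] by simp
    then have "hb_cong (sh (gpow i) (gpow j)) (rmul ((cst ?c1 \<cdot> gpow (i' + j)) \<cdot> bpow 1) La
        + rmul ((cst ?c2 \<cdot> gpow (i' + j)) \<cdot> bpow 1) La + 0)"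
      unfolding eq using less[of i j'] less[of i' j] ij
      by (intro hb_cong_add cong_step) simp_all
    also have "rmul ((cst ?c1 \<cdot> gpow (i' + j)) \<cdot> bpow 1) La + rmul ((cst ?c2 \<cdot> gpow (i' + j)) \<cdot> bpow 1) La + 0
        = cst (?c1 + ?c2) \<cdot> gpow (Suc (i' + j))"
      by (simp only: gpow_Suc cst_add ncmul_assoc rmul_ncmul[symmetric] add_0_right rmul_add)
    also have "?c1 + ?c2 = [:of_nat ((i + j) choose i):]"
      using ij by (simp add: add.commute)
    finally show ?thesis
      using ij by simp
  qed
qed

lemma weighted_shpow: "all_terms weighted x \<Longrightarrow> all_terms weighted (shpow x n)"
  by (induction n) (simp_all add: weighted_ncone weighted_sh)

lemma hb_cong_shpow:
  assumes "hb_cong x y" "all_terms weighted x" "all_terms weighted y"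
  shows "hb_cong (shpow x n) (shpow y n)"
proof (induction n)
  case 0
  then show ?case by (simp add: hb_cong_refl)
next
  case (Suc n)
  have "hb_cong (sh x (shpow x n)) (sh y (shpow x n))"
    using assms by (intro hb_cong_sh_left weighted_shpow)
  also have "hb_cong (sh y (shpow x n)) (sh y (shpow y n))"
    using assms Suc.IH by (intro hb_cong_sh_right)
  finally show ?case by simp
qed

lemma shpow_g1_hb_cong: "hb_cong (shpow (g 1) n) (cst [:fact n:] \<cdot> gpow n)"
proof (induction n)
  case 0
  then show ?case by (simp add: one_pCons[symmetric] hb_cong_refl cst_one_eq_ncone)
next
  case (Suc n)
  have "hb_cong (sh (g 1) (shpow (g 1) n)) (cst [:fact n:] \<cdot> sh (gpow 1) (gpow n))"
    using hb_cong_sh_right[OF weighted_g Suc.IH] by (simp add: sh_cst_right)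
  also have "hb_cong \<dots> (cst [:fact n:] \<cdot> (cst [:of_nat ((1 + n) choose 1):] \<cdot> gpow (1 + n)))"
    by (rule hb_cong_cst, rule sh_gpow_gpow)
  also have "cst [:fact n:] \<cdot> (cst [:of_nat ((1 + n) choose 1):] \<cdot> gpow (1 + n)) = cst [:fact (Suc n):] \<cdot> gpow (Suc n)"
    by (simp add: cst_ncmul_cst algebra_simps del: ncpow.simps)
  finally show ?case by simp
qed

lemma weighted_cst_gpow: "all_terms weighted (cst [:r:] \<cdot> gpow n)"
  by (rule all_terms_cst_const, rule weighted_gpow)

lemma sh_shpow_g1_shpow_e1:
  assumes "j \<le> m"
  shows "hb_cong (sh (shpow (g 1) j) (shpow (e 1) (m - j))) (cst [:fact m:] \<cdot> gpow m)"
proof -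
  have we: "all_terms weighted (shpow (e 1) (m - j))"
    by (rule weighted_shpow, rule weighted_e) simp
  have "hb_cong (sh (shpow (g 1) j) (shpow (e 1) (m - j))) (sh (cst [:fact j:] \<cdot> gpow j) (shpow (e 1) (m - j)))"
    using shpow_g1_hb_cong we by (rule hb_cong_sh_left)
  also have "hb_cong \<dots> (sh (cst [:fact j:] \<cdot> gpow j) (shpow (g 1) (m - j)))"
    by (intro hb_cong_sh_right hb_cong_shpow weighted_cst_gpow e_hb_cong_g weighted_e weighted_g) simp_all
  also have "hb_cong \<dots> (sh (cst [:fact j:] \<cdot> gpow j) (cst [:fact (m - j):] \<cdot> gpow (m - j)))"
    by (intro hb_cong_sh_right weighted_cst_gpow shpow_g1_hb_cong)
  also have "\<dots> = cst [:fact j * fact (m - j):] \<cdot> sh (gpow j) (gpow (m - j))"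
    by (simp add: sh_cst_left sh_cst_right cst_ncmul_cst del: ncpow.simps)
  also have "hb_cong \<dots> (cst [:fact j * fact (m - j):] \<cdot> (cst [:of_nat ((j + (m - j)) choose j):] \<cdot> gpow (j + (m - j))))"
    by (rule hb_cong_cst, rule sh_gpow_gpow)
  also have "\<dots> = cst [:fact m:] \<cdot> gpow m"
  proof -
    have "(fact j :: rat) * fact (m - j) * of_nat (m choose j) = fact m"
      using binomial_fact_lemma[OF assms] by (metis of_nat_fact of_nat_mult)
    then show ?thesis
      using assms by (simp add: cst_ncmul_cst algebra_simps del: ncpow.simps)
  qed
  finally show ?thesis .
qed

lemma E1_hb_cong: "hb_cong (E1 m) (gpow m)"
proof -
  have "hb_cong (E1 m) (cst [:inverse (fact (Suc m)):] \<cdot> (\<Sum>j\<le>m. cst [:fact m:] \<cdot> gpow m))"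
    unfolding E1_def by (intro hb_cong_cst hb_cong_sum sh_shpow_g1_shpow_e1) simp
  also have "(\<Sum>j\<le>m. cst [:fact m:] \<cdot> gpow m) = cst [:of_nat (Suc m) * fact m:] \<cdot> gpow m"
    by (simp add: ncmul_sum_left[symmetric] cst_sum[symmetric] of_nat_poly mult.commute del: ncpow.simps)
  also have "cst [:inverse (fact (Suc m)):] \<cdot> (cst [:of_nat (Suc m) * fact m:] \<cdot> gpow m) = gpow m"
  proof -
    have "[:inverse (fact (Suc m)):] * [:of_nat (Suc m) * fact m:]
        = ([:inverse (fact (Suc m)) * (of_nat (Suc m) * fact m):] :: coef)"
      by simp
    also have "inverse (fact (Suc m)) * (of_nat (Suc m) * fact m) = (1::rat)"
      by (metis fact_Suc fact_nonzero left_inverse)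
    finally have "[:inverse (fact (Suc m)):] * [:of_nat (Suc m) * fact m:] = (1::coef)"
      by (simp only: one_pCons)
    then show ?thesis
      by (simp only: cst_ncmul_cst cst_one)
  qed
  finally show ?thesis .
qed

lemma E1_0: "E1 0 = ncone"
  by (simp add: E1_def one_pCons[symmetric] cst_one_eq_ncone)

lemma Eaux_snoc: "k \<noteq> 1 \<Longrightarrow> Eaux s (ks @ [k]) = Eaux s ks \<cdot> e k"
  by (induction ks arbitrary: s) (auto simp: E1_0 ncmul_assoc)

lemma gidx_Nil: "gidx [] = ncone"
  by (simp add: gidx_def prodl_Nil)

lemma gidx_Cons: "gidx (k # ks) = g k \<cdot> gidx ks"
  by (simp add: gidx_def prodl_Cons)

lemma gidx_snoc: "gidx (ks @ [k]) = gidx ks \<cdot> g k"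
  by (simp add: gidx_def prodl_append prodl_Cons prodl_Nil)

lemma weighted_gidx: "\<forall>k\<in>set ks. 1 \<le> k \<Longrightarrow> all_terms weighted (gidx ks)"
  by (induction ks) (auto simp: gidx_Nil gidx_Cons weighted_ncone intro!: weighted_ncmul weighted_g)

lemma Eaux_hb_cong: "\<forall>k\<in>set ks. 1 \<le> k \<Longrightarrow> hb_cong (Eaux s ks) (gpow s \<cdot> gidx ks)"
proof (induction ks arbitrary: s)
  case Nil
  then show ?case using E1_hb_cong[of s] by (simp add: gidx_Nil)
next
  case (Cons k ks)
  then have k: "1 \<le> k" "\<forall>k\<in>set ks. 1 \<le> k" by auto
  show ?case
  proof (cases "k = 1")
    case True
    then show ?thesis
      using Cons.IH[OF k(2), of "Suc s"] by (simp add: gidx_Cons ncpow_Suc_right ncmul_assoc del: ncpow.simps)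
  next
    case False
    have IH: "hb_cong (Eaux 0 ks) (gidx ks)"
      using Cons.IH[OF k(2), of 0] by simp
    have head: "hb_cong (E1 s \<cdot> e k) (gpow s \<cdot> g k)"
      using E1_hb_cong e_hb_cong_g[OF k(1)] weighted_gpow weighted_e[OF k(1)] by (rule hb_cong_ncmul)
    have "all_terms weighted (Eaux 0 ks)"
      using IH weighted_gidx[OF k(2)] by (rule hb_cong_weighted)
    then have "hb_cong (E1 s \<cdot> e k \<cdot> Eaux 0 ks) (gpow s \<cdot> g k \<cdot> gidx ks)"
      by (rule hb_cong_ncmul[OF head IH weighted_ncmul[OF weighted_gpow weighted_g[OF k(1)]]])
    then show ?thesis
      using False by (simp add: gidx_Cons ncmul_assoc)
  qed
qed

section \<open>The recursion for the coefficients of a shuffle of series\<close>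

lemma ssh_commute: "ssh F G n = ssh G F n"
proof -
  have "ssh F G n = (\<Sum>i\<le>n. sh (F (n - i)) (G i))"
    unfolding ssh_def by (rule sum.reindex_bij_witness[where i="\<lambda>i. n - i" and j="\<lambda>i. n - i"]) auto
  then show ?thesis
    by (simp add: ssh_def sh_commute)
qed

lemma sum_atMost_atLeastAtMost_swap:
  fixes f :: "nat \<Rightarrow> nat \<Rightarrow> 'a::comm_monoid_add"
  shows "(\<Sum>i\<le>n. \<Sum>l\<in>{1..i}. f i l) = (\<Sum>l\<in>{1..n}. \<Sum>i\<le>n - l. f (l + i) l)"
proof -
  have "(\<Sum>i\<le>n. \<Sum>l\<in>{1..i}. f i l) = (\<Sum>i\<in>{..n}. \<Sum>l\<in>{l\<in>{1..n}. l \<le> i}. f i l)"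
    by (rule sum.cong[OF refl], rule sum.cong) auto
  also have "\<dots> = (\<Sum>l\<in>{1..n}. \<Sum>i\<in>{i\<in>{..n}. l \<le> i}. f i l)"
    by (rule sum.swap_restrict) auto
  also have "\<dots> = (\<Sum>l\<in>{1..n}. \<Sum>i\<le>n - l. f (l + i) l)"
  proof (rule sum.cong[OF refl])
    fix l assume "l \<in> {1..n}"
    then show "(\<Sum>i\<in>{i\<in>{..n}. l \<le> i}. f i l) = (\<Sum>i\<le>n - l. f (l + i) l)"
      by (intro sum.reindex_bij_witness[where i="\<lambda>i. l + i" and j="\<lambda>i. i - l"]) auto
  qed
  finally show ?thesis .
qed

lemma ssh_bconv_left: "ssh (bconv p A) C n = bconv p (ssh A C) n"
proof -
  have "ssh (bconv p A) C n = (\<Sum>i\<le>n. \<Sum>l\<in>{1..i}. cst (p l) \<cdot> (sh (A (i - l)) (C (n - i)) \<cdot> bpow l))"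
    by (simp add: ssh_def bconv_def sh_sum_left sh_cst_left sh_ncmul_bpow_left)
  also have "\<dots> = (\<Sum>l\<in>{1..n}. \<Sum>i\<le>n - l. cst (p l) \<cdot> (sh (A (l + i - l)) (C (n - (l + i))) \<cdot> bpow l))"
    by (rule sum_atMost_atLeastAtMost_swap)
  also have "\<dots> = bconv p (ssh A C) n"
    by (simp add: bconv_def ssh_def ncmul_sum_right ncmul_sum_left diff_diff_add)
  finally show ?thesis .
qed

lemma ssh_bconv_right: "ssh A (bconv q C) n = bconv q (ssh A C) n"
proof -
  have "ssh A (bconv q C) n = bconv q (ssh C A) n"
    by (simp only: ssh_commute[of A] ssh_bconv_left)
  also have "\<dots> = bconv q (ssh A C) n"
    by (rule bconv_cong) (rule ssh_commute)
  finally show ?thesis .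
qed

text \<open>The rule for \<open>x a sh y a\<close>, applied to all pairs of coefficients of
  \<open>A = 1 + a La\<close> and \<open>C = c La\<close>.\<close>
lemma ssh_rmul_La_rec:
  assumes A0: "A 0 = ncone" and A: "\<And>i. 1 \<le> i \<Longrightarrow> A i = rmul (bconv p A i) La"
    and C: "\<And>j. C j = rmul (c j) La" and c: "\<And>j. 1 \<le> j \<Longrightarrow> c j = bconv q C j"
  shows "ssh A C n = rmul (ssh A c n + bconv p (ssh A C) n + cst hbar \<cdot> bconv p (ssh A c) n) La"
    and "ssh A c n = sh (A n) (c 0) + bconv q (ssh A C) n"
proof -
  have S: "sh (A i) (C j) = rmul (sh (A i) (c j) + sh (bconv p A i) (C j) + cst hbar \<cdot> sh (bconv p A i) (c j)) La"
    for i j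
  proof (cases "i = 0")
    case True
    then show ?thesis by (simp add: A0 C)
  next
    case False
    then show ?thesis
      using A[of i] C[of j] by (simp add: sh_rmul_La_La)
  qed
  have "ssh A C n = rmul (ssh A c n + ssh (bconv p A) C n + cst hbar \<cdot> ssh (bconv p A) c n) La"
    by (simp add: ssh_def S rmul_add rmul_sum[symmetric] sum.distrib ncmul_sum_right)
  then show "ssh A C n = rmul (ssh A c n + bconv p (ssh A C) n + cst hbar \<cdot> bconv p (ssh A c) n) La"
    by (simp only: ssh_bconv_left)
  have "ssh A c n = sh (A n) (c 0) + (\<Sum>i<n. sh (A i) (c (n - i)))"
    by (simp add: ssh_def lessThan_Suc_atMost[symmetric])
  also have "(\<Sum>i<n. sh (A i) (c (n - i))) = ssh A (bconv q C) n"
    by (simp add: ssh_def c lessThan_Suc_atMost[symmetric])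
  finally show "ssh A c n = sh (A n) (c 0) + bconv q (ssh A C) n"
    by (simp add: ssh_bconv_right)
qed

definition lhs_series :: "nc \<Rightarrow> ser" where
  "lhs_series x = ssh (geom RG) (\<lambda>m. x \<cdot> geom GX m)"

definition rhs_series :: "nc \<Rightarrow> ser" where
  "rhs_series x = ssh (geom GX) (\<lambda>m. x \<cdot> geom RG m)"

definition RG_coeff_shift :: "nat \<Rightarrow> coef" where
  "RG_coeff_shift l = (if 2 \<le> l then RG_coeff (l - 1) else 0)"

lemma bconv_RG_coeff_shift:
  "bconv RG_coeff_shift F n = (\<Sum>l\<in>{1..n - 1}. cst (RG_coeff l) \<cdot> (F (n - 1 - l) \<cdot> bpow (Suc l)))"
proof (cases n)
  case (Suc k)
  then have "bconv RG_coeff_shift F n = (\<Sum>l\<in>{Suc 1..Suc k}. cst (RG_coeff_shift l) \<cdot> (F (n - l) \<cdot> bpow l))"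
    by (simp add: bconv_def sum.atLeast_Suc_atMost RG_coeff_shift_def)
  also have "\<dots> = (\<Sum>l\<in>{1..k}. cst (RG_coeff l) \<cdot> (F (k - l) \<cdot> bpow (Suc l)))"
    using Suc by (subst sum.shift_bounds_cl_Suc_ivl) (simp add: RG_coeff_shift_def)
  finally show ?thesis using Suc by simp
qed simp

lemma bconv_RG_coeff_bconv_GX_coeff: "bconv RG_coeff (bconv GX_coeff F) n = bconv RG_coeff_shift F n"
proof (cases "n = 0")
  case False
  then have "{1..n} = insert n {1..n - 1}"
    by auto
  then have "bconv RG_coeff (bconv GX_coeff F) n
      = (\<Sum>l\<in>{1..n - 1}. cst (RG_coeff l) \<cdot> (bconv GX_coeff F (n - l) \<cdot> bpow l))"
    using False by (simp add: bconv_def[of RG_coeff])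
  also have "\<dots> = (\<Sum>l\<in>{1..n - 1}. cst (RG_coeff l) \<cdot> (F (n - 1 - l) \<cdot> bpow (Suc l)))"
    by (rule sum.cong) (auto simp: bconv_GX_coeff ncmul_assoc bpow_add)
  finally show ?thesis
    by (simp add: bconv_RG_coeff_shift)
qed simp

lemma bconv_GX_coeff_bconv_RG_coeff: "bconv GX_coeff (bconv RG_coeff F) n = bconv RG_coeff_shift F n"
proof (cases n)
  case (Suc k)
  then have "bconv GX_coeff (bconv RG_coeff F) n
      = (\<Sum>l\<in>{1..k}. cst (RG_coeff l) \<cdot> (F (k - l) \<cdot> bpow l)) \<cdot> bpow 1"
    by (simp add: bconv_GX_coeff bconv_def[of RG_coeff])
  also have "\<dots> = (\<Sum>l\<in>{1..k}. cst (RG_coeff l) \<cdot> (F (k - l) \<cdot> bpow (Suc l)))"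
    by (simp add: ncmul_sum_left ncmul_assoc bpow_add)
  finally show ?thesis
    using Suc by (simp add: bconv_RG_coeff_shift)
qed simp

lemma lhs_series_rec:
  fixes w :: nc
  defines "L \<equiv> lhs_series (rmul w La)"
  shows "L n = rmul (sh (geom RG n) w + bconv GX_coeff L n + bconv RG_coeff L n
      + cst hbar \<cdot> (bconv RG_coeff (\<lambda>m. sh (geom RG m) w) n + bconv RG_coeff_shift L n)) La"
proof -
  let ?C = "\<lambda>m. rmul w La \<cdot> geom GX m"
  define c where "c j = (if j = 0 then w else bconv GX_coeff ?C j)" for j
  have C: "?C j = rmul (c j) La" for j
    by (cases "j = 0") (simp_all add: c_def geom_0 ncmul_geom_GX_rec)
  note rec = ssh_rmul_La_rec[where A="geom RG" and C="?C" and c=c and p=RG_coeff and q=GX_coeff,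
      OF geom_0 geom_RG_rec C]
  have "ssh (geom RG) c m = sh (geom RG m) w + bconv GX_coeff L m" for m
    using rec(2)[of m] by (simp add: c_def L_def lhs_series_def)
  then show ?thesis
    using rec(1)[of n]
    by (simp add: L_def lhs_series_def c_def bconv_add bconv_RG_coeff_bconv_GX_coeff ncmul_add_right
        add_ac cong: bconv_cong)
qed

lemma rhs_series_rec:
  fixes E :: nc
  defines "R \<equiv> rhs_series (rmul E La)"
  shows "R n = rmul (sh (geom GX n) E + bconv RG_coeff R n + bconv GX_coeff R n
      + cst hbar \<cdot> (bconv GX_coeff (\<lambda>m. sh (geom GX m) E) n + bconv RG_coeff_shift R n)) La"
proof -
  let ?C = "\<lambda>m. rmul E La \<cdot> geom RG m"
  define c where "c j = (if j = 0 then E else bconv RG_coeff ?C j)" for j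
  have C: "?C j = rmul (c j) La" for j
    by (cases "j = 0") (simp_all add: c_def geom_0 ncmul_geom_RG_rec)
  note rec = ssh_rmul_La_rec[where A="geom GX" and C="?C" and c=c and p=GX_coeff and q=RG_coeff,
      OF geom_0 geom_GX_rec C]
  have "ssh (geom GX) c m = sh (geom GX m) E + bconv RG_coeff R m" for m
    using rec(2)[of m] by (simp add: c_def R_def rhs_series_def)
  then show ?thesis
    using rec(1)[of n]
    by (simp add: R_def rhs_series_def c_def bconv_add bconv_GX_coeff_bconv_RG_coeff ncmul_add_right
        add_ac cong: bconv_cong)
qed

lemma coeff_RG_coeff_nonzero: "coeff (RG_coeff l) i \<noteq> 0 \<Longrightarrow> i = l - 1"
  by (auto simp: RG_coeff_def split: if_splits)

lemma coeff_GX_coeff_nonzero: "coeff (GX_coeff l) i \<noteq> 0 \<Longrightarrow> l = 1 \<and> i = 0"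
  by (auto simp: GX_coeff_def coeff_1 split: if_splits)

lemma coeff_hbar_RG_coeff_nonzero: "1 \<le> l \<Longrightarrow> coeff (hbar * RG_coeff l) i \<noteq> 0 \<Longrightarrow> i = l"
  by (auto simp: RG_coeff_def hbar_eq_monom mult_monom split: if_splits)

lemma coeff_hbar_GX_coeff_nonzero: "coeff (hbar * GX_coeff l) i \<noteq> 0 \<Longrightarrow> l = 1 \<and> i = 1"
  by (auto simp: GX_coeff_def hbar_def coeff_pCons split: if_splits nat.splits)

lemma coeff_hbar_RG_coeff_shift_nonzero: "coeff (hbar * RG_coeff_shift l) i \<noteq> 0 \<Longrightarrow> i = l - 1"
  by (auto simp: RG_coeff_shift_def RG_coeff_def hbar_eq_monom mult_monom split: if_splits)

lemma all_terms_n_term_bconv: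
  assumes "\<And>m. m < n \<Longrightarrow> all_terms n_term (F m)" "\<And>l i. 1 \<le> l \<Longrightarrow> coeff (p l) i \<noteq> 0 \<Longrightarrow> l - 1 \<le> i"
  shows "all_terms n_term (rmul (bconv p F n) La)"
  unfolding rmul_bconv by (intro all_terms_sum all_terms_n_term_rmul_bpow) (use assms in auto)

lemma all_terms_weighted_bconv:
  assumes "\<And>m. all_terms weighted (F m)" "\<And>l i. 1 \<le> l \<Longrightarrow> coeff (p l) i \<noteq> 0 \<Longrightarrow> l \<le> i"
  shows "all_terms n_term (rmul (bconv p F n) La)"
  unfolding rmul_bconv by (intro all_terms_sum all_terms_weighted_rmul_bpow) (use assms in auto)

lemma lhs_series_minus_rhs_series:
  fixes w E :: nc
  defines "D \<equiv> \<lambda>m. lhs_series (rmul w La) m - rhs_series (rmul E La) m"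
  shows "D n = rmul (sh (geom RG n - geom GX n) w + sh (geom GX n) (w - E)) La
      + rmul (bconv GX_coeff D n) La + rmul (bconv RG_coeff D n) La
      + rmul (bconv (\<lambda>l. hbar * RG_coeff l) (\<lambda>m. sh (geom RG m) w) n) La
      - rmul (bconv (\<lambda>l. hbar * GX_coeff l) (\<lambda>m. sh (geom GX m) E) n) La
      + rmul (bconv (\<lambda>l. hbar * RG_coeff_shift l) D n) La"
  unfolding D_def lhs_series_rec[of w n] rhs_series_rec[of E n]
  by (simp only: bconv_diff cst_ncmul_bconv[symmetric] sh_diff_left sh_diff_right rmul_add[symmetric]
      rmul_diff[symmetric] ncmul_add_right ncmul_diff_right) (simp add: algebra_simps)

lemma lhs_series_minus_rhs_series_n_term:
  assumes w: "all_terms weighted w" and E: "all_terms weighted E" and wE: "hb_cong w E"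
  shows "all_terms n_term (lhs_series (rmul w La) n - rhs_series (rmul E La) n)"
proof (induction n rule: less_induct)
  case (less n)
  define D where "D = (\<lambda>m. lhs_series (rmul w La) m - rhs_series (rmul E La) m)"
  have IH: "\<And>m. m < n \<Longrightarrow> all_terms n_term (D m)"
    using less by (simp add: D_def)
  have "all_terms weighted_pos (sh (geom RG n - geom GX n) w + sh (geom GX n) (w - E))"
    using geom_RG_hb_cong_geom_GX[of n] wE weighted_gpow[of n] w unfolding hb_cong_def geom_GX
    by (intro all_terms_add weighted_pos_sh_left weighted_pos_sh_right)
  then have "all_terms n_term (rmul (sh (geom RG n - geom GX n) w + sh (geom GX n) (w - E)) La)"
    by (rule all_terms_weighted_pos_rmul_La)
  moreover have "all_terms n_term (rmul (bconv GX_coeff D n) La)"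
    by (rule all_terms_n_term_bconv[OF IH]) (auto dest: coeff_GX_coeff_nonzero)
  moreover have "all_terms n_term (rmul (bconv RG_coeff D n) La)"
    by (rule all_terms_n_term_bconv[OF IH]) (auto dest: coeff_RG_coeff_nonzero)
  moreover have "all_terms n_term (rmul (bconv (\<lambda>l. hbar * RG_coeff l) (\<lambda>m. sh (geom RG m) w) n) La)"
    by (rule all_terms_weighted_bconv[OF weighted_sh[OF weighted_geom_RG w]])
       (metis coeff_hbar_RG_coeff_nonzero order_refl)
  moreover have "all_terms n_term (rmul (bconv (\<lambda>l. hbar * GX_coeff l) (\<lambda>m. sh (geom GX m) E) n) La)"
    by (rule all_terms_weighted_bconv[OF weighted_sh[OF _ E]])
       (auto simp: geom_GX weighted_gpow[simplified] dest: coeff_hbar_GX_coeff_nonzero)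
  moreover have "all_terms n_term (rmul (bconv (\<lambda>l. hbar * RG_coeff_shift l) D n) La)"
    by (rule all_terms_n_term_bconv[OF IH]) (auto dest: coeff_hbar_RG_coeff_shift_nonzero)
  ultimately have "all_terms n_term (D n)"
    unfolding D_def by (subst lhs_series_minus_rhs_series, fold D_def) (intro all_terms_add all_terms_diff)
  then show ?case
    by (simp add: D_def)
qed

lemma admissible_last_La:
  assumes "admissible ks" "ks \<noteq> []"
  obtains w E where "gidx ks = rmul w La" "Eidx ks = rmul E La"
    "all_terms weighted w" "all_terms weighted E" "hb_cong w E"
proof -
  obtain ks0 k where ks: "ks = ks0 @ [k]"
    using assms(2) by (metis append_butlast_last_id)
  then have k: "2 \<le> k" and ks0: "\<forall>x\<in>set ks0. 1 \<le> x"
    using assms(1) by (auto simp: admissible_def)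
  have rk: "replicate k La = replicate (k - 1) La @ [La]"
    using k by (cases k) (auto simp: replicate_append_same)
  have "g k = rmul (g (k - 1)) La"
    by (simp add: g_def rk rmul_mono del: replicate_Suc)
  moreover have "e k = rmul (e (k - 1)) La"
  proof -
    have "replicate (k - 1) La = replicate (k - 1 - 1) La @ [La]"
      using k by (cases k; cases "k - 1") (auto simp: replicate_append_same)
    then show ?thesis
      by (simp only: e_def mono_append rmul_def ncmul_assoc)
  qed
  ultimately have "gidx ks = rmul (gidx ks0 \<cdot> g (k - 1)) La" "Eidx ks = rmul (Eaux 0 ks0 \<cdot> e (k - 1)) La"
    using k by (simp_all add: ks gidx_snoc Eidx_def Eaux_snoc rmul_ncmul)
  moreover have E0: "hb_cong (Eaux 0 ks0) (gidx ks0)"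
    using Eaux_hb_cong[OF ks0, of 0] by simp
  have k1: "1 \<le> k - 1"
    using k by simp
  have "hb_cong (Eaux 0 ks0 \<cdot> e (k - 1)) (gidx ks0 \<cdot> g (k - 1))"
    by (rule hb_cong_ncmul[OF E0 e_hb_cong_g[OF k1] weighted_gidx[OF ks0] weighted_e[OF k1]])
  then have "hb_cong (gidx ks0 \<cdot> g (k - 1)) (Eaux 0 ks0 \<cdot> e (k - 1))"
    by (rule hb_cong_sym)
  moreover have "all_terms weighted (gidx ks0 \<cdot> g (k - 1))" "all_terms weighted (Eaux 0 ks0 \<cdot> e (k - 1))"
    using hb_cong_weighted[OF E0 weighted_gidx[OF ks0]] weighted_gidx[OF ks0] weighted_g[OF k1]
      weighted_e[OF k1] by (auto intro: weighted_ncmul)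
  ultimately show ?thesis
    using that by blast
qed

theorem lemma5p9:
  fixes ks :: "nat list"
  assumes "admissible ks"
  shows "\<forall>n. ssh (geom RG) (\<lambda>m. gidx ks \<cdot> geom GX m) n
            - ssh (geom GX) (\<lambda>m. Eidx ks \<cdot> geom RG m) n \<in> frak_n"
proof
  fix n
  show "ssh (geom RG) (\<lambda>m. gidx ks \<cdot> geom GX m) n - ssh (geom GX) (\<lambda>m. Eidx ks \<cdot> geom RG m) n \<in> frak_n"
  proof (cases "ks = []")
    case True
    then show ?thesis
      using ssh_commute[of "geom RG" "geom GX" n] frak_n_zero by (simp add: gidx_Nil Eidx_def E1_0)
  next
    case False
    with assms obtain w E where "gidx ks = rmul w La" "Eidx ks = rmul E La"
      "all_terms weighted w" "all_terms weighted E" "hb_cong w E"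
      by (rule admissible_last_La)
    then show ?thesis
      using lhs_series_minus_rhs_series_n_term all_terms_n_term_in_frak_n
      by (simp add: lhs_series_def rhs_series_def)
  qed
qed

end
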